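(* Let $\langle A,B\rangle$ be a recursively inseparable pair. Then $\mathsf{G1}$ holds for the theory $U_{\langle A,B\rangle}$.
   Context: $\langle A,B\rangle$ is a recursively inseparable pair if $A,B$ are disjoint r.e. subsets of $\mathbb{N}$ and there is no recursive $X\subseteq\mathbb{N}$ with $A\subseteq X$ and $X\cap B=\emptyset$. $U_{\langle A,B\rangle}$ is the r.e. theory in the language $\{\mathbf 0,\mathbf S,\mathbf P\}$ ($\mathbf 0$ a constant, $\mathbf S$ unary function, $\mathbf P$ unary relation; $\overline n=\mathbf S^n\mathbf 0$) with axioms: $\overline m\neq\overline n$ for $m\neq n$; $\mathbf P(\overline n)$ for $n\in A$; $\neg\mathbf P(\overline n)$ for $n\in B$. "$\mathsf{G1}$ holds for $T$" means: for every recursively axiomatizable consistent theory $S$, if $T$ is interpretable in $S$ (relative interpretation) then $S$ is incomplete. *)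

theory Defs
  imports Main "HOL-Library.Nat_Bijection"
begin

text \<open>recfn n f: f is a total (mu-)recursive function of arity n; f is applied to
  argument lists of length n (values on other lengths are irrelevant).
  Minimization is only allowed when it is regular (always terminates), which gives
  exactly the total recursive functions.\<close>

inductive recfn :: "nat \<Rightarrow> (nat list \<Rightarrow> nat) \<Rightarrow> bool" where
  rf_zero: "recfn n (\<lambda>xs. 0)"
| rf_succ: "recfn 1 (\<lambda>xs. Suc (hd xs))"
| rf_proj: "i < n \<Longrightarrow> recfn n (\<lambda>xs. xs ! i)"
| rf_comp: "recfn m g \<Longrightarrow> length hs = m \<Longrightarrow> (\<forall>h\<in>set hs. recfn n h) \<Longrightarrow>
            recfn n (\<lambda>xs. g (map (\<lambda>h. h xs) hs))"
| rf_prec: "recfn n g \<Longrightarrow> recfn (Suc (Suc n)) h \<Longrightarrow>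
            recfn (Suc n) (\<lambda>xs. rec_nat (g (tl xs)) (\<lambda>y r. h (r # y # tl xs)) (hd xs))"
| rf_mu:   "recfn (Suc n) g \<Longrightarrow> (\<forall>xs. length xs = n \<longrightarrow> (\<exists>y. g (y # xs) = 0)) \<Longrightarrow>
            recfn n (\<lambda>xs. LEAST y. g (y # xs) = 0)"

definition recursive_set :: "nat set \<Rightarrow> bool" where
  "recursive_set X \<longleftrightarrow> (\<exists>f. recfn 1 f \<and> (\<forall>x. f [x] = (if x \<in> X then 1 else 0)))"

definition re_set :: "nat set \<Rightarrow> bool" where
  "re_set X \<longleftrightarrow> (\<exists>f. recfn 2 f \<and> (\<forall>x. x \<in> X \<longleftrightarrow> (\<exists>y. f [x, y] = 0)))"

definition rec_inseparable :: "nat set \<Rightarrow> nat set \<Rightarrow> bool" where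
  "rec_inseparable A B \<longleftrightarrow> re_set A \<and> re_set B \<and> A \<inter> B = {} \<and>
     \<not> (\<exists>X. recursive_set X \<and> A \<subseteq> X \<and> X \<inter> B = {})"

section \<open>First-order logic with equality (de Bruijn indices)\<close>

datatype tm = Var nat | Fn nat "tm list"
datatype fm = Bot | Eq tm tm | Rel nat "tm list" | Imp fm fm | All fm

text \<open>A language: arities of function symbols and of relation symbols (None = not a symbol).
  Equality is always present.\<close>
type_synonym lang = "(nat \<Rightarrow> nat option) \<times> (nat \<Rightarrow> nat option)"

fun wf_tm :: "lang \<Rightarrow> tm \<Rightarrow> bool" where
  "wf_tm L (Var i) = True"
| "wf_tm L (Fn f ts) = (fst L f = Some (length ts) \<and> (\<forall>t\<in>set ts. wf_tm L t))"

fun wf_fm :: "lang \<Rightarrow> fm \<Rightarrow> bool" where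
  "wf_fm L Bot = True"
| "wf_fm L (Eq s t) = (wf_tm L s \<and> wf_tm L t)"
| "wf_fm L (Rel r ts) = (snd L r = Some (length ts) \<and> (\<forall>t\<in>set ts. wf_tm L t))"
| "wf_fm L (Imp p q) = (wf_fm L p \<and> wf_fm L q)"
| "wf_fm L (All p) = wf_fm L p"

fun fv_tm :: "tm \<Rightarrow> nat set" where
  "fv_tm (Var i) = {i}"
| "fv_tm (Fn f ts) = (\<Union>t\<in>set ts. fv_tm t)"

fun fv_fm :: "fm \<Rightarrow> nat set" where
  "fv_fm Bot = {}"
| "fv_fm (Eq s t) = fv_tm s \<union> fv_tm t"
| "fv_fm (Rel r ts) = (\<Union>t\<in>set ts. fv_tm t)"
| "fv_fm (Imp p q) = fv_fm p \<union> fv_fm q"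
| "fv_fm (All p) = {i. Suc i \<in> fv_fm p}"

definition sentence :: "lang \<Rightarrow> fm \<Rightarrow> bool" where
  "sentence L p \<longleftrightarrow> wf_fm L p \<and> fv_fm p = {}"

fun subst_tm :: "(nat \<Rightarrow> tm) \<Rightarrow> tm \<Rightarrow> tm" where
  "subst_tm \<sigma> (Var i) = \<sigma> i"
| "subst_tm \<sigma> (Fn f ts) = Fn f (map (subst_tm \<sigma>) ts)"

definition up :: "(nat \<Rightarrow> tm) \<Rightarrow> nat \<Rightarrow> tm" where
  "up \<sigma> i = (case i of 0 \<Rightarrow> Var 0 | Suc j \<Rightarrow> subst_tm (\<lambda>m. Var (Suc m)) (\<sigma> j))"

fun subst_fm :: "(nat \<Rightarrow> tm) \<Rightarrow> fm \<Rightarrow> fm" where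
  "subst_fm \<sigma> Bot = Bot"
| "subst_fm \<sigma> (Eq s t) = Eq (subst_tm \<sigma> s) (subst_tm \<sigma> t)"
| "subst_fm \<sigma> (Rel r ts) = Rel r (map (subst_tm \<sigma>) ts)"
| "subst_fm \<sigma> (Imp p q) = Imp (subst_fm \<sigma> p) (subst_fm \<sigma> q)"
| "subst_fm \<sigma> (All p) = All (subst_fm (up \<sigma>) p)"

text \<open>inst p t: instantiate the bound variable 0 of p (the body of a quantifier) by t.\<close>
definition inst :: "fm \<Rightarrow> tm \<Rightarrow> fm" where
  "inst p t = subst_fm (\<lambda>i. case i of 0 \<Rightarrow> t | Suc j \<Rightarrow> Var j) p"

definition lift_fm :: "fm \<Rightarrow> fm" where
  "lift_fm p = subst_fm (\<lambda>i. Var (Suc i)) p"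

definition Neg :: "fm \<Rightarrow> fm" where "Neg p = Imp p Bot"
definition Top :: fm where "Top = Imp Bot Bot"
definition And :: "fm \<Rightarrow> fm \<Rightarrow> fm" where "And p q = Neg (Imp p (Neg q))"
definition Ex :: "fm \<Rightarrow> fm" where "Ex p = Neg (All (Neg p))"
definition Conjs :: "fm list \<Rightarrow> fm" where "Conjs ps = foldr And ps Top"
definition Exs :: "nat \<Rightarrow> fm \<Rightarrow> fm" where "Exs k p = (Ex ^^ k) p"
definition Alls :: "nat \<Rightarrow> fm \<Rightarrow> fm" where "Alls k p = (All ^^ k) p"

inductive prov :: "lang \<Rightarrow> fm \<Rightarrow> bool" for L where
  ax1: "wf_fm L p \<Longrightarrow> wf_fm L q \<Longrightarrow> prov L (Imp p (Imp q p))"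
| ax2: "wf_fm L p \<Longrightarrow> wf_fm L q \<Longrightarrow> wf_fm L r \<Longrightarrow>
        prov L (Imp (Imp p (Imp q r)) (Imp (Imp p q) (Imp p r)))"
| ax3: "wf_fm L p \<Longrightarrow> prov L (Imp (Neg (Neg p)) p)"
| ax_inst: "wf_fm L p \<Longrightarrow> wf_tm L t \<Longrightarrow> prov L (Imp (All p) (inst p t))"
| ax_vac: "wf_fm L p \<Longrightarrow> prov L (Imp p (All (lift_fm p)))"
| ax_dist: "wf_fm L p \<Longrightarrow> wf_fm L q \<Longrightarrow> prov L (Imp (All (Imp p q)) (Imp (All p) (All q)))"
| ax_refl: "wf_tm L t \<Longrightarrow> prov L (Eq t t)"
| ax_leib: "wf_fm L p \<Longrightarrow> wf_tm L s \<Longrightarrow> wf_tm L t \<Longrightarrow>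
            prov L (Imp (Eq s t) (Imp (inst p s) (inst p t)))"
| mp: "prov L (Imp p q) \<Longrightarrow> prov L p \<Longrightarrow> prov L q"
| gen: "prov L p \<Longrightarrow> prov L (All p)"

type_synonym fo_theory = "lang \<times> fm set"

definition is_theory :: "fo_theory \<Rightarrow> bool" where
  "is_theory T \<longleftrightarrow> (\<forall>p\<in>snd T. sentence (fst T) p)"

definition thm_of :: "fo_theory \<Rightarrow> fm \<Rightarrow> bool" where
  "thm_of T p \<longleftrightarrow> (\<exists>axs. set axs \<subseteq> snd T \<and> prov (fst T) (foldr Imp axs p))"

definition consistent :: "fo_theory \<Rightarrow> bool" where
  "consistent T \<longleftrightarrow> \<not> thm_of T Bot"

definition complete :: "fo_theory \<Rightarrow> bool" where
  "complete T \<longleftrightarrow> (\<forall>p. sentence (fst T) p \<longrightarrow> thm_of T p \<or> thm_of T (Neg p))"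

fun enc_tm :: "tm \<Rightarrow> nat" where
  "enc_tm (Var i) = prod_encode (0, i)"
| "enc_tm (Fn f ts) = prod_encode (1, prod_encode (f, list_encode (map enc_tm ts)))"

fun enc_fm :: "fm \<Rightarrow> nat" where
  "enc_fm Bot = prod_encode (0, 0)"
| "enc_fm (Eq s t) = prod_encode (1, prod_encode (enc_tm s, enc_tm t))"
| "enc_fm (Rel r ts) = prod_encode (2, prod_encode (r, list_encode (map enc_tm ts)))"
| "enc_fm (Imp p q) = prod_encode (3, prod_encode (enc_fm p, enc_fm q))"
| "enc_fm (All p) = prod_encode (4, enc_fm p)"

definition recursive_lang :: "lang \<Rightarrow> bool" where
  "recursive_lang L \<longleftrightarrow>
     recursive_set {prod_encode (f, k) | f k. fst L f = Some k} \<and>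
     recursive_set {prod_encode (r, k) | r k. snd L r = Some k}"

definition rec_axiomatizable :: "fo_theory \<Rightarrow> bool" where
  "rec_axiomatizable T \<longleftrightarrow> recursive_lang (fst T) \<and>
     (\<exists>Ax. (\<forall>p\<in>Ax. sentence (fst T) p) \<and> recursive_set (enc_fm ` Ax) \<and>
          (\<forall>p. sentence (fst T) p \<longrightarrow> (thm_of (fst T, Ax) p \<longleftrightarrow> thm_of T p)))"

text \<open>An interpretation data (Dm, F, R) for a source language into a target language:
  Dm: domain formula, free variable Var 0;
  F f: for a function symbol f of arity k, a formula with Var 0 = value, Var i = i-th argument (1 \<le> i \<le> k);
  R r: for a relation symbol r of arity k, a formula with Var (i-1) = i-th argument.
  Equality is translated as equality.\<close>
type_synonym interp = "fm \<times> (nat \<Rightarrow> fm) \<times> (nat \<Rightarrow> fm)"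

text \<open>Combining translated arguments phis (each with Var 0 = value, Var (m+1) = original variable m)
  under k = length phis existential quantifiers; the j-th witness is Var j; the outer context
  has off extra variables before the original ones; psi is the final (already shifted) formula.\<close>
definition combine :: "fm \<Rightarrow> nat \<Rightarrow> fm list \<Rightarrow> fm \<Rightarrow> fm" where
  "combine Dm off phis psi =
     (let k = length phis in
      Exs k (Conjs (map (\<lambda>j. subst_fm (\<lambda>i. Var j) Dm) [0..<k] @
                    map (\<lambda>j. subst_fm (\<lambda>m. if m = 0 then Var j else Var (k + off + m - 1)) (phis ! j)) [0..<k] @
                    [psi])))"

text \<open>tr_tm I t: formula with Var 0 = value of t, Var (m+1) = variable m of t.\<close>
fun tr_tm :: "interp \<Rightarrow> tm \<Rightarrow> fm" where
  "tr_tm I (Var i) = Eq (Var 0) (Var (Suc i))"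
| "tr_tm I (Fn f ts) =
     (let k = length ts; (Dm, F, R) = I in
      combine Dm 1 (map (tr_tm I) ts)
        (subst_fm (\<lambda>i. if i = 0 then Var k else if i \<le> k then Var (i - 1) else Var (k + i)) (F f)))"

fun tr_fm :: "interp \<Rightarrow> fm \<Rightarrow> fm" where
  "tr_fm I Bot = Bot"
| "tr_fm I (Eq s t) = combine (fst I) 0 [tr_tm I s, tr_tm I t] (Eq (Var 0) (Var 1))"
| "tr_fm I (Rel r ts) =
     (let k = length ts in
      combine (fst I) 0 (map (tr_tm I) ts)
        (subst_fm (\<lambda>i. if i < k then Var i else Var (k + i)) (snd (snd I) r)))"
| "tr_fm I (Imp p q) = Imp (tr_fm I p) (tr_fm I q)"
| "tr_fm I (All p) = All (Imp (fst I) (tr_fm I p))"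

definition is_interpretation :: "interp \<Rightarrow> fo_theory \<Rightarrow> fo_theory \<Rightarrow> bool" where
  "is_interpretation I T S \<longleftrightarrow>
    (let (Dm, F, R) = I; LT = fst T; LS = fst S in
     wf_fm LS Dm \<and> fv_fm Dm \<subseteq> {0} \<and>
     (\<forall>f k. fst LT f = Some k \<longrightarrow> wf_fm LS (F f) \<and> fv_fm (F f) \<subseteq> {0..k}) \<and>
     (\<forall>r k. snd LT r = Some k \<longrightarrow> wf_fm LS (R r) \<and> fv_fm (R r) \<subseteq> {..<k}) \<and>
     thm_of S (Ex Dm) \<and>
     (\<forall>f k. fst LT f = Some k \<longrightarrow>
        thm_of S (Alls k (Imp (Conjs (map (\<lambda>j. subst_fm (\<lambda>i. Var j) Dm) [0..<k]))
                         (Ex (And Dm (F f))))) \<and>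
        thm_of S (Alls k (Imp (Conjs (map (\<lambda>j. subst_fm (\<lambda>i. Var j) Dm) [0..<k]))
                 (All (All (Imp (Conjs [subst_fm (\<lambda>i. Var 0) Dm, subst_fm (\<lambda>i. Var 1) Dm,
                                         subst_fm (\<lambda>i. if i = 0 then Var 1 else Var (Suc i)) (F f),
                                         subst_fm (\<lambda>i. if i = 0 then Var 0 else Var (Suc i)) (F f)])
                                (Eq (Var 0) (Var 1)))))))) \<and>
     (\<forall>p\<in>snd T. thm_of S (tr_fm I p)))"

definition interpretable :: "fo_theory \<Rightarrow> fo_theory \<Rightarrow> bool" where
  "interpretable T S \<longleftrightarrow> (\<exists>I. is_interpretation I T S)"

definition G1 :: "fo_theory \<Rightarrow> bool" where
  "G1 T \<longleftrightarrow> (\<forall>S. is_theory S \<and> rec_axiomatizable S \<and> consistent S \<and> interpretable T S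
                  \<longrightarrow> \<not> complete S)"

text \<open>Language {0, S, P}: function symbol 0 = constant zero, function symbol 1 = successor S,
  relation symbol 0 = unary predicate P.\<close>
definition L_U :: lang where
  "L_U = ((\<lambda>f. if f = 0 then Some 0 else if f = 1 then Some 1 else None),
          (\<lambda>r. if r = 0 then Some 1 else None))"

fun numeral_tm :: "nat \<Rightarrow> tm" where
  "numeral_tm 0 = Fn 0 []"
| "numeral_tm (Suc n) = Fn 1 [numeral_tm n]"

definition U_theory :: "nat set \<Rightarrow> nat set \<Rightarrow> fo_theory" where
  "U_theory A B = (L_U,
     {Neg (Eq (numeral_tm m) (numeral_tm n)) | m n. m \<noteq> n} \<union>
     {Rel 0 [numeral_tm n] | n. n \<in> A} \<union>
     {Neg (Rel 0 [numeral_tm n]) | n. n \<in> B})"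

end

theory Submission
  imports Defs
begin

text \<open>Suppose a consistent, complete, recursively axiomatized theory \<open>S\<close> interprets
  \<open>U_theory A B\<close>, and let \<open>\<phi> n\<close> be the translation of \<open>P(n)\<close>. By completeness \<open>S\<close> proves
  \<open>\<phi> n\<close> or \<open>\<not> \<phi> n\<close> for every \<open>n\<close>, so searching through the theorems of \<open>S\<close> decides the set
  \<open>X = {n. S \<turnstile> \<phi> n}\<close>. The interpretation puts \<open>A\<close> inside \<open>X\<close> and, by consistency, keeps \<open>B\<close>
  outside, so \<open>X\<close> would recursively separate \<open>A\<close> from \<open>B\<close>.

  The search is formalised as derivability in a decidable rule system on codes whose judgements
  express well-formedness, substitution, provability and theoremhood: a total function whose
  graph is derivable in such a system is computable, by searching for a derivation.\<close>

section \<open>Total recursive functions and decidable predicates\<close>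

text \<open>\<open>recfn\<close> fixes a function on all lists, while only its values on lists of the right length
  matter; \<open>computable\<close> forgets the others.\<close>

definition computable :: "nat \<Rightarrow> (nat list \<Rightarrow> nat) \<Rightarrow> bool" where
  "computable n f \<longleftrightarrow> (\<exists>g. recfn n g \<and> (\<forall>xs. length xs = n \<longrightarrow> g xs = f xs))"

lemma recfn_computable: "recfn n f \<Longrightarrow> computable n f"
  unfolding computable_def by blast

lemma computable_cong: "computable n f \<Longrightarrow> (\<And>xs. length xs = n \<Longrightarrow> f xs = g xs) \<Longrightarrow> computable n g"
  unfolding computable_def by metis

lemma computable_proj: "i < n \<Longrightarrow> computable n (\<lambda>xs. xs ! i)"
  using rf_proj recfn_computable by blast

lemma computable_map_recfn:
  assumes "\<forall>h\<in>set hs. computable n h"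
  shows "\<exists>hs'. length hs' = length hs \<and> (\<forall>h\<in>set hs'. recfn n h) \<and>
     (\<forall>xs. length xs = n \<longrightarrow> map (\<lambda>h. h xs) hs' = map (\<lambda>h. h xs) hs)"
  using assms
proof (induction hs)
  case Nil
  then show ?case by auto
next
  case (Cons h hs)
  then obtain hs' where hs': "length hs' = length hs" "\<forall>h\<in>set hs'. recfn n h"
     "\<forall>xs. length xs = n \<longrightarrow> map (\<lambda>h. h xs) hs' = map (\<lambda>h. h xs) hs" by auto
  from Cons.prems obtain g where g: "recfn n g" "\<forall>xs. length xs = n \<longrightarrow> g xs = h xs"
    unfolding computable_def by auto
  show ?case using hs' g by (intro exI[of _ "g # hs'"]) auto
qed

lemma computable_comp:
  assumes "computable m g" "length hs = m" "\<forall>h\<in>set hs. computable n h"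
  shows "computable n (\<lambda>xs. g (map (\<lambda>h. h xs) hs))"
proof -
  obtain hs' where hs': "length hs' = length hs" "\<forall>h\<in>set hs'. recfn n h"
     "\<forall>xs. length xs = n \<longrightarrow> map (\<lambda>h. h xs) hs' = map (\<lambda>h. h xs) hs"
    using computable_map_recfn[OF assms(3)] by blast
  obtain g' where g': "recfn m g'" "\<forall>xs. length xs = m \<longrightarrow> g' xs = g xs"
    using assms(1) unfolding computable_def by auto
  have "recfn n (\<lambda>xs. g' (map (\<lambda>h. h xs) hs'))"
    using rf_comp[OF g'(1)] hs' assms(2) by auto
  moreover have "\<forall>xs. length xs = n \<longrightarrow> g' (map (\<lambda>h. h xs) hs') = g (map (\<lambda>h. h xs) hs)"
  proof (intro allI impI)
    fix xs :: "nat list" assume xs: "length xs = n"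
    then have "map (\<lambda>h. h xs) hs' = map (\<lambda>h. h xs) hs" using hs' by auto
    moreover have "length (map (\<lambda>h. h xs) hs) = m" using assms(2) by simp
    ultimately show "g' (map (\<lambda>h. h xs) hs') = g (map (\<lambda>h. h xs) hs)" using g' by simp
  qed
  ultimately show ?thesis unfolding computable_def by blast
qed

lemma computable_comp1: "computable 1 g \<Longrightarrow> computable n f \<Longrightarrow> computable n (\<lambda>xs. g [f xs])"
  using computable_comp[of 1 g "[f]" n] by simp

lemma computable_comp2:
  "computable 2 g \<Longrightarrow> computable n f1 \<Longrightarrow> computable n f2 \<Longrightarrow> computable n (\<lambda>xs. g [f1 xs, f2 xs])"
  using computable_comp[of 2 g "[f1, f2]" n] by simp

lemma computable_Suc: "computable n f \<Longrightarrow> computable n (\<lambda>xs. Suc (f xs))"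
  using computable_comp1[OF recfn_computable[OF rf_succ]] by simp

lemma computable_const: "computable n (\<lambda>xs. c)"
  by (induction c) (auto intro: recfn_computable rf_zero computable_Suc)

lemma computable_prec_hd:
  assumes "computable n g" "computable (Suc (Suc n)) h"
  shows "computable (Suc n) (\<lambda>xs. rec_nat (g (tl xs)) (\<lambda>y r. h (r # y # tl xs)) (hd xs))"
proof -
  obtain g' where g': "recfn n g'" "\<forall>xs. length xs = n \<longrightarrow> g' xs = g xs"
    using assms(1) unfolding computable_def by auto
  obtain h' where h': "recfn (Suc (Suc n)) h'" "\<forall>xs. length xs = Suc (Suc n) \<longrightarrow> h' xs = h xs"
    using assms(2) unfolding computable_def by auto
  have "recfn (Suc n) (\<lambda>xs. rec_nat (g' (tl xs)) (\<lambda>y r. h' (r # y # tl xs)) (hd xs))"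
    by (rule rf_prec[OF g'(1) h'(1)])
  moreover have "rec_nat (g' (tl xs)) (\<lambda>y r. h' (r # y # tl xs)) (hd xs) =
     rec_nat (g (tl xs)) (\<lambda>y r. h (r # y # tl xs)) (hd xs)" if "length xs = Suc n" for xs
  proof -
    have "g' (tl xs) = g (tl xs)" using g' that by simp
    moreover have "(\<lambda>y r. h' (r # y # tl xs)) = (\<lambda>y r. h (r # y # tl xs))"
      using h' that by auto
    ultimately show ?thesis by simp
  qed
  ultimately show ?thesis unfolding computable_def by blast
qed

lemma computable_prec:
  assumes "computable n g" "computable (Suc (Suc n)) h" "computable n a"
  shows "computable n (\<lambda>xs. rec_nat (g xs) (\<lambda>y r. h (r # y # xs)) (a xs))"
proof -
  let ?P = "(\<lambda>xs. rec_nat (g (tl xs)) (\<lambda>y r. h (r # y # tl xs)) (hd xs))"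
  have "computable n (\<lambda>xs. ?P (map (\<lambda>h. h xs) (a # map (\<lambda>i xs. xs ! i) [0..<n])))"
    by (rule computable_comp[OF computable_prec_hd[OF assms(1,2)]]) (use assms(3) computable_proj in auto)
  then show ?thesis
    by (rule computable_cong) (simp add: comp_def, metis map_nth)
qed

lemma computable_mu:
  assumes "computable (Suc n) g" "\<forall>xs. length xs = n \<longrightarrow> (\<exists>y. g (y # xs) = 0)"
  shows "computable n (\<lambda>xs. LEAST y. g (y # xs) = 0)"
proof -
  obtain g' where g': "recfn (Suc n) g'" "\<forall>xs. length xs = Suc n \<longrightarrow> g' xs = g xs"
    using assms(1) unfolding computable_def by auto
  have eq: "g' (y # xs) = g (y # xs)" if "length xs = n" for xs y
    using g'(2) that by simp
  have "recfn n (\<lambda>xs. LEAST y. g' (y # xs) = 0)"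
  proof (rule rf_mu[OF g'(1)], intro allI impI)
    fix xs :: "nat list" assume "length xs = n"
    then show "\<exists>y. g' (y # xs) = 0" using assms(2) eq by simp
  qed
  moreover have "\<forall>xs. length xs = n \<longrightarrow> (LEAST y. g' (y # xs) = 0) = (LEAST y. g (y # xs) = 0)"
    using eq by simp
  ultimately show ?thesis unfolding computable_def by blast
qed

lemma computable_drop: "computable n f \<Longrightarrow> computable (k + n) (\<lambda>ys. f (drop k ys))"
proof -
  assume f: "computable n f"
  have "computable (k + n) (\<lambda>ys. f (map (\<lambda>h. h ys) (map (\<lambda>i ys. ys ! (k + i)) [0..<n])))"
    by (rule computable_comp[OF f]) (auto intro: computable_proj)
  moreover have eq: "map (\<lambda>i. ys ! (k + i)) [0..<n] = drop k ys" if "length ys = k + n" for ys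
    by (rule nth_equalityI) (use that in auto)
  ultimately show ?thesis
    by (elim computable_cong) (simp only: map_map comp_def eq)
qed

lemma computable_tl: "computable n f \<Longrightarrow> computable (Suc n) (\<lambda>ys. f (tl ys))"
  using computable_drop[of n f 1] by (simp add: drop_Suc)

lemma computable_add: "computable n f \<Longrightarrow> computable n g \<Longrightarrow> computable n (\<lambda>xs. f xs + g xs)"
proof -
  assume f: "computable n f" and g: "computable n g"
  have "computable n (\<lambda>xs. rec_nat (f xs) (\<lambda>y r. (\<lambda>ys. Suc (ys ! 0)) (r # y # xs)) (g xs))"
    by (rule computable_prec[OF f _ g]) (rule computable_Suc, rule computable_proj, simp)
  moreover have "rec_nat a (\<lambda>y r. Suc r) b = a + b" for a b :: nat
    by (induction b) auto
  ultimately show ?thesis by simp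
qed

lemma computable_pred: "computable n f \<Longrightarrow> computable n (\<lambda>xs. f xs - 1)"
proof -
  assume f: "computable n f"
  have "computable n (\<lambda>xs. rec_nat 0 (\<lambda>y r. (\<lambda>ys. ys ! 1) (r # y # xs)) (f xs))"
    by (rule computable_prec[OF computable_const _ f]) (rule computable_proj, simp)
  moreover have "rec_nat 0 (\<lambda>y r. y) b = b - 1" for b :: nat
    by (induction b) auto
  ultimately show ?thesis by simp
qed

lemma computable_sub: "computable n f \<Longrightarrow> computable n g \<Longrightarrow> computable n (\<lambda>xs. f xs - g xs)"
proof -
  assume f: "computable n f" and g: "computable n g"
  have "computable n (\<lambda>xs. rec_nat (f xs) (\<lambda>y r. (\<lambda>ys. ys ! 0 - 1) (r # y # xs)) (g xs))"
    by (rule computable_prec[OF f _ g]) (rule computable_pred, rule computable_proj, simp)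
  moreover have "rec_nat a (\<lambda>y r. r - 1) b = a - b" for a b :: nat
    by (induction b) auto
  ultimately show ?thesis by simp
qed

lemma computable_mult: "computable n f \<Longrightarrow> computable n g \<Longrightarrow> computable n (\<lambda>xs. f xs * g xs)"
proof -
  assume f: "computable n f" and g: "computable n g"
  have f2: "computable (2 + n) (\<lambda>ys. f (drop 2 ys))" by (rule computable_drop[OF f])
  have "computable n (\<lambda>xs. rec_nat 0 (\<lambda>y r. (\<lambda>ys. ys ! 0 + f (drop 2 ys)) (r # y # xs)) (g xs))"
    by (rule computable_prec[OF computable_const _ g]) (rule computable_add, rule computable_proj, simp, use f2 in simp)
  moreover have "rec_nat 0 (\<lambda>y r. r + a) b = a * b" for a b :: nat
    by (induction b) auto
  ultimately show ?thesis by (simp add: mult.commute)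
qed

definition decidable :: "nat \<Rightarrow> (nat list \<Rightarrow> bool) \<Rightarrow> bool" where
  "decidable n P \<longleftrightarrow> computable n (\<lambda>xs. if P xs then 1 else 0)"

lemma decidable_cong: "decidable n P \<Longrightarrow> (\<And>xs. length xs = n \<Longrightarrow> P xs = Q xs) \<Longrightarrow> decidable n Q"
  unfolding decidable_def by (erule computable_cong) simp

lemma decidable_not: "decidable n P \<Longrightarrow> decidable n (\<lambda>xs. \<not> P xs)"
  unfolding decidable_def by (drule computable_sub[OF computable_const[of n 1]]) (erule computable_cong, simp)

lemma decidable_and: "decidable n P \<Longrightarrow> decidable n Q \<Longrightarrow> decidable n (\<lambda>xs. P xs \<and> Q xs)"
  unfolding decidable_def by (drule (1) computable_mult) (erule computable_cong, simp)

lemma decidable_or: "decidable n P \<Longrightarrow> decidable n Q \<Longrightarrow> decidable n (\<lambda>xs. P xs \<or> Q xs)"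
proof -
  assume "decidable n P" "decidable n Q"
  then have "decidable n (\<lambda>xs. \<not> (\<not> P xs \<and> \<not> Q xs))"
    by (intro decidable_not decidable_and)
  then show ?thesis by simp
qed

lemma decidable_imp: "decidable n P \<Longrightarrow> decidable n Q \<Longrightarrow> decidable n (\<lambda>xs. P xs \<longrightarrow> Q xs)"
proof -
  assume "decidable n P" "decidable n Q"
  then have "decidable n (\<lambda>xs. \<not> P xs \<or> Q xs)"
    by (intro decidable_not decidable_or)
  then show ?thesis by simp
qed

lemma decidable_le: "computable n f \<Longrightarrow> computable n g \<Longrightarrow> decidable n (\<lambda>xs. f xs \<le> g xs)"
  unfolding decidable_def by (drule (1) computable_sub, drule computable_sub[OF computable_const[of n 1]]) (erule computable_cong, simp)

lemma decidable_less: "computable n f \<Longrightarrow> computable n g \<Longrightarrow> decidable n (\<lambda>xs. f xs < g xs)"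
proof -
  assume "computable n f" "computable n g"
  then have "decidable n (\<lambda>xs. \<not> g xs \<le> f xs)" by (intro decidable_not decidable_le)
  then show ?thesis by (simp add: not_le)
qed

lemma decidable_eq: "computable n f \<Longrightarrow> computable n g \<Longrightarrow> decidable n (\<lambda>xs. f xs = g xs)"
proof -
  assume "computable n f" "computable n g"
  then have "decidable n (\<lambda>xs. f xs \<le> g xs \<and> g xs \<le> f xs)" by (intro decidable_and decidable_le)
  then show ?thesis by (rule decidable_cong) auto
qed

lemma computable_if:
  "decidable n P \<Longrightarrow> computable n f \<Longrightarrow> computable n g \<Longrightarrow> computable n (\<lambda>xs. if P xs then f xs else g xs)"
proof -
  assume P: "decidable n P" and f: "computable n f" and g: "computable n g"
  have "computable n (\<lambda>xs. (if P xs then 1 else 0) * f xs + (1 - (if P xs then 1 else 0)) * g xs)"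
    using P f g unfolding decidable_def by (intro computable_add computable_mult computable_sub computable_const)
  then show ?thesis by (rule computable_cong) simp
qed

lemma decidable_ex_less:
  assumes P: "decidable (Suc n) (\<lambda>ys. P (hd ys) (tl ys))" and b: "computable n b"
  shows "decidable n (\<lambda>xs. \<exists>y<b xs. P y xs)"
proof -
  have P2: "decidable (Suc (Suc n)) (\<lambda>ys. P (ys ! 1) (drop 2 ys))"
    using computable_tl[OF P[unfolded decidable_def]] unfolding decidable_def
    by (rule computable_cong) (auto simp: length_Suc_conv)
  have "computable n (\<lambda>xs. rec_nat 0 (\<lambda>y r. (\<lambda>ys. if ys ! 0 = 1 \<or> P (ys ! 1) (drop 2 ys) then 1 else 0) (r # y # xs)) (b xs))"
    by (rule computable_prec[OF computable_const _ b]) (rule computable_if, rule decidable_or, rule decidable_eq, rule computable_proj,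
        simp, rule computable_const, rule P2, rule computable_const, rule computable_const)
  moreover have H: "rec_nat 0 (\<lambda>y r. if (r # y # xs) ! 0 = 1 \<or> P ((r # y # xs) ! 1) (drop 2 (r # y # xs))
      then 1 else 0) m = (if \<exists>y<m. P y xs then 1 else 0)" for m xs
    by (induction m) (auto simp: less_Suc_eq)
  ultimately show ?thesis unfolding decidable_def by (elim computable_cong) (simp only: H)
qed

lemma decidable_all_less:
  assumes P: "decidable (Suc n) (\<lambda>ys. P (hd ys) (tl ys))" and b: "computable n b"
  shows "decidable n (\<lambda>xs. \<forall>y<b xs. P y xs)"
proof -
  have "decidable n (\<lambda>xs. \<not> (\<exists>y<b xs. \<not> P y xs))"
    by (rule decidable_not, rule decidable_ex_less[OF decidable_not[OF P] b])
  then show ?thesis by simp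
qed

text \<open>The arity \<open>m\<close> is a separate variable so that numeral arities such as \<open>4\<close> unify with it.\<close>

lemma decidable_ex_less_Cons:
  assumes "computable n b" "\<And>y xs. length xs = n \<Longrightarrow> Q (y # xs) = P y xs" "decidable m Q" "m = Suc n"
  shows "decidable n (\<lambda>xs. \<exists>y<b xs. P y xs)"
proof (rule decidable_ex_less[OF _ assms(1)])
  show "decidable (Suc n) (\<lambda>ys. P (hd ys) (tl ys))"
    by (rule decidable_cong[OF assms(3)[unfolded assms(4)]]) (auto simp: length_Suc_conv simp: assms(2))
qed

lemma decidable_all_less_Cons:
  assumes "computable n b" "\<And>y xs. length xs = n \<Longrightarrow> Q (y # xs) = P y xs" "decidable m Q" "m = Suc n"
  shows "decidable n (\<lambda>xs. \<forall>y<b xs. P y xs)"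
proof (rule decidable_all_less[OF _ assms(1)])
  show "decidable (Suc n) (\<lambda>ys. P (hd ys) (tl ys))"
    by (rule decidable_cong[OF assms(3)[unfolded assms(4)]]) (auto simp: length_Suc_conv simp: assms(2))
qed

lemma decidable_mem: "recursive_set X \<Longrightarrow> computable n f \<Longrightarrow> decidable n (\<lambda>xs. f xs \<in> X)"
  unfolding recursive_set_def decidable_def
  by (elim exE conjE, drule recfn_computable, drule (1) computable_comp1) simp

lemma recursive_set_CollectI:
  assumes "decidable 1 (\<lambda>xs. P (xs ! 0))"
  shows "recursive_set {n. P n}"
proof -
  obtain g where "recfn 1 g" "\<forall>xs. length xs = 1 \<longrightarrow> g xs = (if P (xs ! 0) then 1 else 0)"
    using assms unfolding decidable_def computable_def by blast
  then show ?thesis unfolding recursive_set_def by (intro exI[of _ g]) auto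
qed

lemma computable_mu_pred:
  assumes "decidable (Suc n) P" "\<forall>xs. length xs = n \<longrightarrow> (\<exists>y. P (y # xs))"
  shows "computable n (\<lambda>xs. LEAST y. P (y # xs))"
proof -
  have "decidable (Suc n) (\<lambda>ys. \<not> P ys)" by (rule decidable_not[OF assms(1)])
  then have "computable n (\<lambda>xs. LEAST y. (if \<not> P (y # xs) then 1 else 0) = (0::nat))"
    unfolding decidable_def by (rule computable_mu) (use assms(2) in auto)
  then show ?thesis by (rule computable_cong) (rule arg_cong[where f=Least], auto)
qed

lemma computable_triangle: "computable n f \<Longrightarrow> computable n (\<lambda>xs. triangle (f xs))"
proof -
  assume f: "computable n f"
  have "computable n (\<lambda>xs. rec_nat 0 (\<lambda>y r. (\<lambda>ys. ys ! 0 + Suc (ys ! 1)) (r # y # xs)) (f xs))"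
    by (rule computable_prec[OF computable_const _ f]) (intro computable_add computable_Suc computable_proj; simp)
  moreover have "rec_nat 0 (\<lambda>y r. r + Suc y) b = triangle b" for b :: nat
    by (induction b) auto
  ultimately show ?thesis by simp
qed

lemma computable_prod_encode: "computable n f \<Longrightarrow> computable n g \<Longrightarrow> computable n (\<lambda>xs. prod_encode (f xs, g xs))"
  unfolding prod_encode_def by (simp, intro computable_add computable_triangle)

definition pfst :: "nat \<Rightarrow> nat" where "pfst z = fst (prod_decode z)"
definition psnd :: "nat \<Rightarrow> nat" where "psnd z = snd (prod_decode z)"

lemma pfst_prod_encode[simp]: "pfst (prod_encode (a, b)) = a" by (simp add: pfst_def)
lemma psnd_prod_encode[simp]: "psnd (prod_encode (a, b)) = b" by (simp add: psnd_def)
lemma prod_encode_pfst_psnd: "prod_encode (pfst z, psnd z) = z" by (simp add: pfst_def psnd_def)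

lemma pfst_least: "pfst z = (LEAST a. \<exists>b<Suc z. prod_encode (a, b) = z)"
proof (rule Least_equality[symmetric])
  show "\<exists>b<Suc z. prod_encode (pfst z, b) = z"
    using prod_encode_pfst_psnd[of z] le_prod_encode_2[of "psnd z" "pfst z"] by (intro exI[of _ "psnd z"]) auto
next
  fix a assume "\<exists>b<Suc z. prod_encode (a, b) = z"
  then obtain b where "prod_encode (a, b) = z" by auto
  then show "pfst z \<le> a" by auto
qed

lemma psnd_least: "psnd z = (LEAST b. \<exists>a<Suc z. prod_encode (a, b) = z)"
proof (rule Least_equality[symmetric])
  show "\<exists>a<Suc z. prod_encode (a, psnd z) = z"
    using prod_encode_pfst_psnd[of z] le_prod_encode_1[of "pfst z" "psnd z"] by (intro exI[of _ "pfst z"]) auto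
next
  fix b assume "\<exists>a<Suc z. prod_encode (a, b) = z"
  then obtain a where "prod_encode (a, b) = z" by auto
  then show "psnd z \<le> b" by auto
qed

lemma computable_least_witness:
  assumes Q: "decidable 3 (\<lambda>ys. Q (ys ! 1) (ys ! 0) (ys ! 2))" and ex: "\<And>z. \<exists>a. \<exists>b<Suc z. Q a b z"
  shows "computable 1 (\<lambda>xs. LEAST a. \<exists>b<Suc (xs ! 0). Q a b (xs ! 0))"
proof -
  have "decidable (Suc 1) (\<lambda>ys. \<exists>b<Suc (ys ! 1). Q (ys ! 0) b (ys ! 1))"
    by (rule decidable_ex_less_Cons[OF _ _ Q]) (auto intro!: computable_Suc computable_proj simp: numeral_eq_Suc)
  then have "computable 1 (\<lambda>xs. LEAST a. \<exists>b<Suc ((a # xs) ! 1). Q ((a # xs) ! 0) b ((a # xs) ! 1))"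
    by (rule computable_mu_pred) (use ex in auto)
  then show ?thesis by (rule computable_cong) simp
qed

lemma computable_pfst1: "computable 1 (\<lambda>xs. pfst (xs ! 0))"
proof -
  have ex: "\<exists>a. \<exists>b<Suc z. prod_encode (a, b) = z" for z
    using prod_encode_pfst_psnd[of z] le_prod_encode_2[of "psnd z" "pfst z"] by (metis le_imp_less_Suc)
  have "computable 1 (\<lambda>xs. LEAST a. \<exists>b<Suc (xs ! 0). prod_encode (a, b) = xs ! 0)"
    using ex by (intro computable_least_witness[where Q = "\<lambda>a b z. prod_encode (a, b) = z"]
      decidable_eq computable_prod_encode computable_proj) auto
  then show ?thesis by (rule computable_cong) (simp add: pfst_least)
qed

lemma computable_psnd1: "computable 1 (\<lambda>xs. psnd (xs ! 0))"
proof -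
  have ex: "\<exists>b. \<exists>a<Suc z. prod_encode (a, b) = z" for z
    using prod_encode_pfst_psnd[of z] le_prod_encode_1[of "pfst z" "psnd z"] by (metis le_imp_less_Suc)
  have "computable 1 (\<lambda>xs. LEAST b. \<exists>a<Suc (xs ! 0). prod_encode (a, b) = xs ! 0)"
    using ex by (intro computable_least_witness[where Q = "\<lambda>b a z. prod_encode (a, b) = z"]
      decidable_eq computable_prod_encode computable_proj) auto
  then show ?thesis by (rule computable_cong) (simp add: psnd_least)
qed

lemma computable_pfst: "computable n f \<Longrightarrow> computable n (\<lambda>xs. pfst (f xs))"
  using computable_comp1[OF computable_pfst1] by simp

lemma computable_psnd: "computable n f \<Longrightarrow> computable n (\<lambda>xs. psnd (f xs))"
  using computable_comp1[OF computable_psnd1] by simp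

definition code_tl :: "nat \<Rightarrow> nat" where "code_tl z = (if z = 0 then 0 else psnd (z - 1))"
definition code_hd :: "nat \<Rightarrow> nat" where "code_hd z = (if z = 0 then 0 else pfst (z - 1))"
definition code_nth :: "nat \<Rightarrow> nat \<Rightarrow> nat" where "code_nth z k = code_hd ((code_tl ^^ k) z)"

lemma code_tl_0[simp]: "code_tl 0 = 0" and code_hd_0[simp]: "code_hd 0 = 0"
  by (simp_all add: code_tl_def code_hd_def)

lemma code_tl_Cons[simp]: "code_tl (Suc (prod_encode (x, y))) = y"
  and code_hd_Cons[simp]: "code_hd (Suc (prod_encode (x, y))) = x"
  by (simp_all add: code_tl_def code_hd_def)

lemma code_nth_0[simp]: "code_nth 0 k = 0"
proof -
  have "(code_tl ^^ k) 0 = 0" by (induction k) auto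
  then show ?thesis by (simp add: code_nth_def)
qed

lemma code_nth_Suc: "code_nth z (Suc k) = code_nth (code_tl z) k"
  unfolding code_nth_def funpow_Suc_right by simp

lemma code_nth_Suc_pair[simp]: "code_nth (Suc (prod_encode (x, y))) k = (if k = 0 then x else code_nth y (k - 1))"
  by (cases k) (simp add: code_nth_def, simp add: code_nth_Suc)

lemma code_nth_list: "code_nth (list_encode xs) k = (if k < length xs then xs ! k else 0)"
  by (induction xs arbitrary: k) (auto simp: nth_Cons')

lemma length_le_list_encode: "length xs \<le> list_encode xs"
  by (induction xs) (auto intro: order_trans[OF _ le_prod_encode_2])

lemma code_nth_ge: "z \<le> k \<Longrightarrow> code_nth z k = 0"
proof -
  assume "z \<le> k"
  moreover have "length (list_decode z) \<le> z"
    using length_le_list_encode[of "list_decode z"] by simp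
  ultimately show ?thesis
    using code_nth_list[of "list_decode z" k] by simp
qed

lemma pfst_0[simp]: "pfst 0 = 0" and psnd_0[simp]: "psnd 0 = 0"
  using pfst_prod_encode[of 0 0] psnd_prod_encode[of 0 0] by (simp_all add: prod_encode_def)

lemma computable_code_tl: "computable n f \<Longrightarrow> computable n (\<lambda>xs. code_tl (f xs))"
  unfolding code_tl_def by (intro computable_if decidable_eq computable_const computable_psnd computable_pred)

lemma computable_code_hd: "computable n f \<Longrightarrow> computable n (\<lambda>xs. code_hd (f xs))"
  unfolding code_hd_def by (intro computable_if decidable_eq computable_const computable_pfst computable_pred)

lemma computable_code_nth: "computable n f \<Longrightarrow> computable n k \<Longrightarrow> computable n (\<lambda>xs. code_nth (f xs) (k xs))"
proof -
  assume f: "computable n f" and k: "computable n k"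
  have "computable n (\<lambda>xs. rec_nat (f xs) (\<lambda>y r. code_tl ((r # y # xs) ! 0)) (k xs))"
    by (rule computable_prec[OF f _ k]) (rule computable_code_tl, rule computable_proj, simp)
  moreover have "rec_nat z (\<lambda>y r. code_tl r) m = (code_tl ^^ m) z" for z m
    by (induction m) auto
  ultimately have "computable n (\<lambda>xs. (code_tl ^^ k xs) (f xs))" by simp
  then show ?thesis unfolding code_nth_def by (rule computable_code_hd)
qed

lemma decidable_comp2: "decidable 2 (\<lambda>xs. P (xs ! 0) (xs ! 1)) \<Longrightarrow>
  computable n f \<Longrightarrow> computable n g \<Longrightarrow> decidable n (\<lambda>xs. P (f xs) (g xs))"
  unfolding decidable_def by (drule (2) computable_comp2) simp

lemma decidable_comp1: "decidable 1 (\<lambda>xs. P (xs ! 0)) \<Longrightarrow> computable n f \<Longrightarrow> decidable n (\<lambda>xs. P (f xs))"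
  unfolding decidable_def by (drule (1) computable_comp1) simp

section \<open>Derivations in a decidable rule system\<close>

text \<open>A rule system relates a conclusion code \<open>c\<close> to the list code \<open>P\<close> of its premises; the code
  \<open>0\<close> is a dummy premise that is always derivable. A derivation is a list of entries \<open>\<langle>c, P\<rangle>\<close> in
  which every nonzero premise of an entry is the conclusion of an earlier entry; entries with
  conclusion \<open>0\<close> are padding.\<close>

inductive derivable :: "(nat \<Rightarrow> nat \<Rightarrow> bool) \<Rightarrow> nat \<Rightarrow> bool" for Rule where
  derivable_dummy: "derivable Rule 0"
| derivable_step: "(\<forall>k. derivable Rule (code_nth P k)) \<Longrightarrow> Rule c P \<Longrightarrow> derivable Rule c"

definition step_ok :: "(nat \<Rightarrow> nat \<Rightarrow> bool) \<Rightarrow> (nat \<Rightarrow> nat) \<Rightarrow> nat \<Rightarrow> bool" where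
  "step_ok Rule e j \<longleftrightarrow> pfst (e j) = 0 \<or>
     (Rule (pfst (e j)) (psnd (e j)) \<and>
      (\<forall>k<psnd (e j). code_nth (psnd (e j)) k = 0 \<or> (\<exists>i<j. pfst (e i) = code_nth (psnd (e j)) k)))"

definition valid_derivation :: "(nat \<Rightarrow> nat \<Rightarrow> bool) \<Rightarrow> nat \<Rightarrow> bool" where
  "valid_derivation Rule l \<longleftrightarrow> (\<forall>j<l. step_ok Rule (code_nth l) j)"

definition valid_derivation_list :: "(nat \<Rightarrow> nat \<Rightarrow> bool) \<Rightarrow> nat list \<Rightarrow> bool" where
  "valid_derivation_list Rule es \<longleftrightarrow> (\<forall>j<length es. step_ok Rule ((!) es) j)"

lemma step_ok_shift:
  assumes "step_ok Rule e j" "\<And>i. i \<le> j \<Longrightarrow> e' (m + i) = e i"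
  shows "step_ok Rule e' (m + j)"
proof -
  have "\<exists>i<m + j. pfst (e' i) = v" if "\<exists>i<j. pfst (e i) = v" for v
    using that assms(2) by (metis add_less_cancel_left less_imp_le)
  then show ?thesis
    using assms unfolding step_ok_def by (simp add: assms(2)[OF order_refl]) blast
qed

lemma valid_derivation_derivable:
  assumes "valid_derivation Rule l"
  shows "derivable Rule (pfst (code_nth l j))"
proof (induction j rule: less_induct)
  case (less j)
  let ?P = "psnd (code_nth l j)"
  show ?case
  proof (cases "j < l \<and> pfst (code_nth l j) \<noteq> 0")
    case False
    then show ?thesis by (auto simp: code_nth_ge derivable_dummy)
  next
    case True
    then have R: "Rule (pfst (code_nth l j)) ?P" and
      K: "\<forall>k<?P. code_nth ?P k = 0 \<or> (\<exists>i<j. pfst (code_nth l i) = code_nth ?P k)"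
      using assms unfolding valid_derivation_def step_ok_def by auto
    have "derivable Rule (code_nth ?P k)" for k
      using K less.IH code_nth_ge[of ?P k] by (cases "k < ?P") (metis derivable_dummy, simp add: derivable_dummy)
    then show ?thesis using derivable_step R by blast
  qed
qed

lemma valid_derivation_list_valid_derivation:
  assumes "valid_derivation_list Rule es"
  shows "valid_derivation Rule (list_encode es)"
  unfolding valid_derivation_def
proof (intro allI impI)
  fix j assume "j < list_encode es"
  show "step_ok Rule (code_nth (list_encode es)) j"
  proof (cases "j < length es")
    case True
    then show ?thesis
      using step_ok_shift[of Rule "(!) es" j "code_nth (list_encode es)" 0] assms
      by (simp add: valid_derivation_list_def code_nth_list)
  qed (simp add: step_ok_def code_nth_list)
qed

lemma valid_derivation_list_append:
  assumes "valid_derivation_list Rule es1" "valid_derivation_list Rule es2"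
  shows "valid_derivation_list Rule (es1 @ es2)"
  unfolding valid_derivation_list_def
proof (intro allI impI)
  fix j assume j: "j < length (es1 @ es2)"
  show "step_ok Rule ((!) (es1 @ es2)) j"
  proof (cases "j < length es1")
    case True
    then show ?thesis
      using step_ok_shift[of Rule "(!) es1" j "(!) (es1 @ es2)" 0] assms(1)
      by (simp add: valid_derivation_list_def nth_append)
  next
    case False
    then obtain j' where "j = length es1 + j'" "j' < length es2"
      using j by (metis add_diff_inverse_nat length_append nat_add_left_cancel_less)
    then show ?thesis
      using step_ok_shift[of Rule "(!) es2" j' "(!) (es1 @ es2)" "length es1"] assms(2)
      by (simp add: valid_derivation_list_def nth_append)
  qed
qed

lemma valid_derivation_list_snoc:
  assumes "valid_derivation_list Rule es" "Rule c P"
    and "\<forall>k<P. code_nth P k = 0 \<or> (\<exists>i<length es. pfst (es ! i) = code_nth P k)"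
  shows "valid_derivation_list Rule (es @ [prod_encode (c, P)])"
  unfolding valid_derivation_list_def
proof (intro allI impI)
  fix j assume "j < length (es @ [prod_encode (c, P)])"
  then consider "j < length es" | "j = length es" by fastforce
  then show "step_ok Rule ((!) (es @ [prod_encode (c, P)])) j"
  proof cases
    case 1
    then show ?thesis
      using step_ok_shift[of Rule "(!) es" j "(!) (es @ [prod_encode (c, P)])" 0] assms(1)
      by (simp add: valid_derivation_list_def nth_append)
  next
    case 2
    then show ?thesis using assms(2,3) by (auto simp: step_ok_def nth_append)
  qed
qed

lemma valid_derivation_list_collect:
  fixes m :: nat and f :: "nat \<Rightarrow> nat"
  assumes "\<And>k. k < m \<Longrightarrow> \<exists>es. valid_derivation_list Rule es \<and> (\<exists>j<length es. pfst (es ! j) = f k)"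
  shows "\<exists>es. valid_derivation_list Rule es \<and> (\<forall>k<m. \<exists>i<length es. pfst (es ! i) = f k)"
  using assms
proof (induction m)
  case 0
  show ?case by (intro exI[of _ "[]"]) (simp add: valid_derivation_list_def)
next
  case (Suc m)
  then obtain es where es: "valid_derivation_list Rule es" "\<forall>k<m. \<exists>i<length es. pfst (es ! i) = f k"
    by auto
  obtain es' j where es': "valid_derivation_list Rule es'" "j < length es'" "pfst (es' ! j) = f m"
    using Suc.prems by blast
  have "\<exists>i<length (es @ es'). pfst ((es @ es') ! i) = f k" if "k < Suc m" for k
  proof (cases "k < m")
    case True
    then show ?thesis using es(2) by (force simp: nth_append)
  next
    case False
    with that have "k = m" by simp
    then show ?thesis using es'(2,3) by (intro exI[of _ "length es + j"]) (auto simp: nth_append)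
  qed
  then show ?case using valid_derivation_list_append[OF es(1) es'(1)] by blast
qed

lemma derivable_valid_derivation_list:
  assumes "derivable Rule c"
  shows "\<exists>es. valid_derivation_list Rule es \<and> (\<exists>j<length es. pfst (es ! j) = c)"
  using assms
proof (induction rule: derivable.induct)
  case derivable_dummy
  show ?case by (intro exI[of _ "[0]"]) (auto simp: valid_derivation_list_def step_ok_def)
next
  case (derivable_step P c)
  obtain es where "valid_derivation_list Rule es" "\<forall>k<P. \<exists>i<length es. pfst (es ! i) = code_nth P k"
    using valid_derivation_list_collect[of P Rule "code_nth P"] derivable_step.IH by blast
  then have "valid_derivation_list Rule (es @ [prod_encode (c, P)])"
    using valid_derivation_list_snoc \<open>Rule c P\<close> by blast
  then show ?case by (intro exI[of _ "es @ [prod_encode (c, P)]"]) auto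
qed

lemma derivable_iff_valid_derivation:
  "derivable Rule c \<longleftrightarrow> (\<exists>l. valid_derivation Rule l \<and> (\<exists>j<l. pfst (code_nth l j) = c))"
proof
  assume "derivable Rule c"
  then obtain es j where es: "valid_derivation_list Rule es" "j < length es" "pfst (es ! j) = c"
    using derivable_valid_derivation_list by blast
  have "j < list_encode es" using es(2) length_le_list_encode[of es] by linarith
  then show "\<exists>l. valid_derivation Rule l \<and> (\<exists>j<l. pfst (code_nth l j) = c)"
    using valid_derivation_list_valid_derivation[OF es(1)] es(2,3)
    by (intro exI[of _ "list_encode es"]) (auto simp: code_nth_list)
qed (use valid_derivation_derivable in blast)

lemma derivable_by_rule:
  "Rule c (list_encode ps) \<Longrightarrow> \<forall>x\<in>set ps. derivable Rule x \<Longrightarrow> derivable Rule c"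
  by (rule derivable_step) (auto simp: code_nth_list intro: derivable_dummy)

lemma decidable_valid_derivation:
  assumes R: "decidable 2 (\<lambda>xs. Rule (xs ! 0) (xs ! 1))"
  shows "decidable 1 (\<lambda>xs. valid_derivation Rule (xs ! 0))"
proof -
  \<comment> \<open>argument lists \<open>[i, k, j, l]\<close>, \<open>[k, j, l]\<close>, \<open>[j, l]\<close>\<close>
  have Q4: "decidable 4 (\<lambda>ws. pfst (code_nth (ws ! 3) (ws ! 0)) = code_nth (psnd (code_nth (ws ! 3) (ws ! 2))) (ws ! 1))"
    by (intro decidable_eq computable_pfst computable_psnd computable_code_nth computable_proj) auto
  have Q3: "decidable 3 (\<lambda>zs. code_nth (psnd (code_nth (zs ! 2) (zs ! 1))) (zs ! 0) = 0 \<or>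
       (\<exists>i<zs ! 1. pfst (code_nth (zs ! 2) i) = code_nth (psnd (code_nth (zs ! 2) (zs ! 1))) (zs ! 0)))"
  proof (rule decidable_or)
    show "decidable 3 (\<lambda>zs. code_nth (psnd (code_nth (zs ! 2) (zs ! 1))) (zs ! 0) = 0)"
      by (intro decidable_eq computable_psnd computable_code_nth computable_proj computable_const) auto
    show "decidable 3 (\<lambda>zs. \<exists>i<zs ! 1. pfst (code_nth (zs ! 2) i) = code_nth (psnd (code_nth (zs ! 2) (zs ! 1))) (zs ! 0))"
      by (rule decidable_ex_less_Cons[OF _ _ Q4]) (auto intro!: computable_proj simp: numeral_eq_Suc)
  qed
  have Q2: "decidable 2 (\<lambda>ys. step_ok Rule (code_nth (ys ! 1)) (ys ! 0))"
    unfolding step_ok_def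
  proof (intro decidable_or decidable_and)
    show "decidable 2 (\<lambda>ys. pfst (code_nth (ys ! 1) (ys ! 0)) = 0)"
      by (intro decidable_eq computable_pfst computable_code_nth computable_proj computable_const) auto
    show "decidable 2 (\<lambda>ys. Rule (pfst (code_nth (ys ! 1) (ys ! 0))) (psnd (code_nth (ys ! 1) (ys ! 0))))"
      by (rule decidable_comp2[OF R]) (intro computable_pfst computable_psnd computable_code_nth computable_proj; simp)+
    show "decidable 2 (\<lambda>ys. \<forall>k<psnd (code_nth (ys ! 1) (ys ! 0)).
            code_nth (psnd (code_nth (ys ! 1) (ys ! 0))) k = 0 \<or>
            (\<exists>i<ys ! 0. pfst (code_nth (ys ! 1) i) = code_nth (psnd (code_nth (ys ! 1) (ys ! 0))) k))"
      by (rule decidable_all_less_Cons[OF _ _ Q3]) (auto intro!: computable_proj computable_psnd computable_code_nth simp: numeral_eq_Suc)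
  qed
  show ?thesis unfolding valid_derivation_def
    by (rule decidable_all_less_Cons[OF _ _ Q2]) (auto intro!: computable_proj simp: numeral_eq_Suc)
qed

text \<open>If every \<open>n\<close> has a derivable answer \<open>\<langle>tag, n, b\<rangle>\<close>, an answer can be computed: search for the
  least \<open>\<langle>b, l\<rangle>\<close> such that \<open>l\<close> is a valid derivation containing \<open>\<langle>tag, n, b\<rangle>\<close>.\<close>

lemma computable_derivable_answer:
  assumes R: "decidable 2 (\<lambda>xs. Rule (xs ! 0) (xs ! 1))"
    and total: "\<And>n. \<exists>b. derivable Rule (prod_encode (tag, prod_encode (n, b)))"
  obtains g where "computable 1 (\<lambda>xs. g (xs ! 0))"
    and "\<And>n. derivable Rule (prod_encode (tag, prod_encode (n, g n)))"
proof -
  define Q where "Q n y \<longleftrightarrow> valid_derivation Rule (psnd y) \<and>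
      (\<exists>j<psnd y. pfst (code_nth (psnd y) j) = prod_encode (tag, prod_encode (n, pfst y)))" for n y
  have Q3: "decidable 3 (\<lambda>ys. pfst (code_nth (psnd (ys ! 1)) (ys ! 0)) = prod_encode (tag, prod_encode (ys ! 2, pfst (ys ! 1))))"
    by (intro decidable_eq computable_pfst computable_psnd computable_code_nth computable_proj computable_prod_encode computable_const) auto
  have Qr: "decidable 2 (\<lambda>ys. Q (ys ! 1) (ys ! 0))"
    unfolding Q_def
  proof (rule decidable_and)
    show "decidable 2 (\<lambda>ys. valid_derivation Rule (psnd (ys ! 0)))"
      by (rule decidable_comp1[OF decidable_valid_derivation[OF R]]) (intro computable_psnd computable_proj, simp)
    show "decidable 2 (\<lambda>ys. \<exists>j<psnd (ys ! 0). pfst (code_nth (psnd (ys ! 0)) j) = prod_encode (tag, prod_encode (ys ! 1, pfst (ys ! 0))))"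
      by (rule decidable_ex_less_Cons[OF _ _ Q3]) (auto intro!: computable_proj computable_psnd simp: numeral_eq_Suc)
  qed
  have ex: "\<exists>y. Q n y" for n
  proof -
    obtain b where "derivable Rule (prod_encode (tag, prod_encode (n, b)))" using total by blast
    then obtain l where "valid_derivation Rule l" "\<exists>j<l. pfst (code_nth l j) = prod_encode (tag, prod_encode (n, b))"
      using derivable_iff_valid_derivation by blast
    then show ?thesis unfolding Q_def by (intro exI[of _ "prod_encode (b, l)"]) simp
  qed
  define y where "y n = (LEAST y. Q n y)" for n
  have "computable 1 (\<lambda>xs. LEAST y. Q ((y # xs) ! 1) ((y # xs) ! 0))"
    by (rule computable_mu_pred) (use Qr in \<open>simp add: numeral_2_eq_2\<close>, auto simp: ex)
  then have "computable 1 (\<lambda>xs. y (xs ! 0))"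
    by (rule computable_cong) (simp add: y_def)
  then have "computable 1 (\<lambda>xs. pfst (y (xs ! 0)))"
    by (rule computable_pfst)
  moreover have "derivable Rule (prod_encode (tag, prod_encode (n, pfst (y n))))" for n
  proof -
    have "Q n (y n)" unfolding y_def using ex by (rule LeastI_ex)
    then show ?thesis unfolding Q_def using valid_derivation_derivable by metis
  qed
  ultimately show ?thesis by (rule that[of "\<lambda>n. pfst (y n)"])
qed

lemma subst_tm_comp: "subst_tm \<sigma> (subst_tm \<tau> t) = subst_tm (\<lambda>i. subst_tm \<sigma> (\<tau> i)) t"
  by (induction t) auto

lemma subst_tm_id: "(\<forall>i\<in>fv_tm t. \<sigma> i = Var i) \<Longrightarrow> subst_tm \<sigma> t = t"
  by (induction t) (auto intro: map_idI)

lemma subst_fm_id: "(\<forall>i\<in>fv_fm p. \<sigma> i = Var i) \<Longrightarrow> subst_fm \<sigma> p = p"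
proof (induction p arbitrary: \<sigma>)
  case (All p)
  have "\<forall>i\<in>fv_fm p. up \<sigma> i = Var i"
    using All.prems by (auto simp: up_def split: nat.splits)
  then show ?case using All.IH by simp
qed (auto intro: subst_tm_id map_idI)

lemma fv_subst_tm: "fv_tm (subst_tm \<sigma> t) = (\<Union>i\<in>fv_tm t. fv_tm (\<sigma> i))"
  by (induction t) auto

lemma fv_up: "fv_tm (up \<sigma> i) = (case i of 0 \<Rightarrow> {0} | Suc j \<Rightarrow> Suc ` fv_tm (\<sigma> j))"
  by (cases i) (auto simp: up_def fv_subst_tm)

lemma fv_subst_fm: "fv_fm (subst_fm \<sigma> p) = (\<Union>i\<in>fv_fm p. fv_tm (\<sigma> i))"
proof (induction p arbitrary: \<sigma>)
  case (All p)
  have "Suc x \<in> fv_tm (up \<sigma> j) \<longleftrightarrow> (\<exists>j'. j = Suc j' \<and> x \<in> fv_tm (\<sigma> j'))" for x j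
    by (cases j) (auto simp: fv_up)
  then show ?case using All.IH by auto
qed (auto simp: fv_subst_tm)

lemma wf_subst_tm: "wf_tm L t \<Longrightarrow> (\<forall>i. wf_tm L (\<sigma> i)) \<Longrightarrow> wf_tm L (subst_tm \<sigma> t)"
  by (induction t) auto

lemma wf_up: "(\<forall>i. wf_tm L (\<sigma> i)) \<Longrightarrow> wf_tm L (up \<sigma> i)"
  by (cases i) (auto simp: up_def intro: wf_subst_tm)

lemma wf_subst_fm: "wf_fm L p \<Longrightarrow> (\<forall>i. wf_tm L (\<sigma> i)) \<Longrightarrow> wf_fm L (subst_fm \<sigma> p)"
proof (induction p arbitrary: \<sigma>)
  case (All p)
  then show ?case using wf_up by simp
qed (auto intro: wf_subst_tm)

lemma wf_subst_var:
  assumes "wf_fm L p" "\<forall>i. \<exists>j. \<sigma> i = Var j"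
  shows "wf_fm L (subst_fm \<sigma> p)"
  using wf_subst_fm[OF assms(1)] assms(2) by (metis wf_tm.simps(1))

text \<open>Unlike \<open>inst\<close> and \<open>lift_fm\<close>, these substitution families are closed under \<open>up\<close>, so
  instances of them can be checked by a structural recursion through binders.\<close>

definition var_shift :: "nat \<Rightarrow> nat \<Rightarrow> nat \<Rightarrow> tm" where
  "var_shift s d i = Var (if i < d then i else i + s)"

definition var_inst :: "nat \<Rightarrow> tm \<Rightarrow> nat \<Rightarrow> tm" where
  "var_inst d t i = (if i < d then Var i else if i = d then subst_tm (var_shift d 0) t else Var (i - 1))"

lemma up_var_shift: "up (var_shift s d) = var_shift s (Suc d)"
  by (rule ext) (auto simp: up_def var_shift_def split: nat.splits)

lemma var_shift_comp: "subst_tm (\<lambda>m. Var (Suc m)) (subst_tm (var_shift d 0) t) = subst_tm (var_shift (Suc d) 0) t"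
  unfolding subst_tm_comp by (rule arg_cong[where f="\<lambda>\<sigma>. subst_tm \<sigma> t"]) (auto simp: var_shift_def)

lemma up_var_inst: "up (var_inst d t) = var_inst (Suc d) t"
  by (rule ext) (auto simp: up_def var_inst_def var_shift_comp split: nat.splits)

lemma subst_var_shift_0: "subst_tm (var_shift 0 0) t = t"
  by (rule subst_tm_id) (simp add: var_shift_def)

lemma inst_var_inst: "inst p t = subst_fm (var_inst 0 t) p"
proof -
  have "(\<lambda>i. case i of 0 \<Rightarrow> t | Suc j \<Rightarrow> Var j) = var_inst 0 t"
    by (rule ext) (auto simp: var_inst_def subst_var_shift_0 split: nat.splits)
  then show ?thesis by (simp add: inst_def)
qed

lemma lift_var_shift: "lift_fm p = subst_fm (var_shift 1 0) p"
proof -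
  have "(\<lambda>i. Var (Suc i)) = var_shift 1 0"
    by (rule ext) (auto simp: var_shift_def)
  then show ?thesis by (simp add: lift_fm_def)
qed

lemma wf_var_shift: "wf_tm L (var_shift s d i)"
  by (simp add: var_shift_def)

lemma wf_var_inst: "wf_tm L t \<Longrightarrow> wf_tm L (var_inst d t i)"
  by (auto simp: var_inst_def intro: wf_subst_tm wf_var_shift)

lemma wf_inst: "wf_fm L p \<Longrightarrow> wf_tm L t \<Longrightarrow> wf_fm L (inst p t)"
  unfolding inst_var_inst by (rule wf_subst_fm) (auto intro: wf_var_inst)

lemma wf_lift: "wf_fm L p \<Longrightarrow> wf_fm L (lift_fm p)"
  unfolding lift_var_shift by (rule wf_subst_fm) (auto intro: wf_var_shift)

lemma inj_enc_tm: "inj enc_tm"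
proof (rule injI)
  show "enc_tm s = enc_tm t \<Longrightarrow> s = t" for s t
  proof (induction s arbitrary: t)
    case (Fn f ts)
    show ?case
    proof (cases t)
      case (Fn g us)
      then have "f = g" "map enc_tm ts = map enc_tm us"
        using Fn.prems by (simp_all add: list_encode_eq)
      moreover have "ts = us"
        by (rule list.inj_map_strong[OF _ calculation(2)]) (use Fn.IH in blast)
      ultimately show ?thesis using Fn by simp
    qed (use Fn.prems in simp)
  next
    case (Var i)
    then show ?case by (cases t) auto
  qed
qed

lemma enc_tm_eq[simp]: "enc_tm s = enc_tm t \<longleftrightarrow> s = t"
  by (rule inj_eq[OF inj_enc_tm])

lemma enc_tms_eq[simp]: "list_encode (map enc_tm ss) = list_encode (map enc_tm ts) \<longleftrightarrow> ss = ts"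
  by (simp add: list_encode_eq inj_map_eq_map[OF inj_enc_tm])

lemma enc_fm_eq[simp]: "enc_fm p = enc_fm q \<longleftrightarrow> p = q"
proof
  show "enc_fm p = enc_fm q \<Longrightarrow> p = q"
  proof (induction p arbitrary: q)
    case Bot then show ?case by (cases q) auto
  next
    case (Eq s t) then show ?case by (cases q) auto
  next
    case (Rel r ts) then show ?case by (cases q) auto
  next
    case (Imp p1 p2) then show ?case by (cases q) auto
  next
    case (All p) then show ?case by (cases q) auto
  qed
qed simp

lemma wf_Neg[simp]: "wf_fm L (Neg p) \<longleftrightarrow> wf_fm L p"
  by (simp add: Neg_def)

lemma fv_Neg[simp]: "fv_fm (Neg p) = fv_fm p" by (simp add: Neg_def)
lemma fv_And[simp]: "fv_fm (And p q) = fv_fm p \<union> fv_fm q" by (simp add: And_def)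
lemma fv_Top[simp]: "fv_fm Top = {}" by (simp add: Top_def)
lemma fv_Ex[simp]: "fv_fm (Ex p) = {i. Suc i \<in> fv_fm p}" by (simp add: Ex_def)
lemma wf_And[simp]: "wf_fm L (And p q) \<longleftrightarrow> wf_fm L p \<and> wf_fm L q" by (simp add: And_def)
lemma wf_Top[simp]: "wf_fm L Top" by (simp add: Top_def)
lemma wf_Ex[simp]: "wf_fm L (Ex p) \<longleftrightarrow> wf_fm L p" by (simp add: Ex_def)

lemma prov_wf: "prov L p \<Longrightarrow> wf_fm L p"
  by (induction rule: prov.induct) (auto simp: wf_inst wf_lift)

lemma prov_imp_refl: "wf_fm L p \<Longrightarrow> prov L (Imp p p)"
proof -
  assume p: "wf_fm L p"
  have 1: "prov L (Imp (Imp p (Imp (Imp p p) p)) (Imp (Imp p (Imp p p)) (Imp p p)))"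
    using p by (intro ax2) auto
  have 2: "prov L (Imp p (Imp (Imp p p) p))" using p by (intro ax1) auto
  have 3: "prov L (Imp p (Imp p p))" using p by (intro ax1) auto
  show ?thesis using mp[OF mp[OF 1 2] 3] .
qed

lemma prov_weaken: "prov L X \<Longrightarrow> wf_fm L a \<Longrightarrow> prov L (Imp a X)"
  using mp[OF ax1 _] prov_wf by blast

lemma prov_mp_under: "prov L (Imp a (Imp X Y)) \<Longrightarrow> prov L (Imp a X) \<Longrightarrow> prov L (Imp a Y)"
proof -
  assume 1: "prov L (Imp a (Imp X Y))" and 2: "prov L (Imp a X)"
  then have "wf_fm L a" "wf_fm L X" "wf_fm L Y" using prov_wf by fastforce+
  then have "prov L (Imp (Imp a (Imp X Y)) (Imp (Imp a X) (Imp a Y)))" by (rule ax2)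
  then show ?thesis using mp 1 2 by blast
qed

lemma prov_imp_trans: "prov L (Imp P Q) \<Longrightarrow> prov L (Imp Q R) \<Longrightarrow> prov L (Imp P R)"
proof -
  assume 1: "prov L (Imp P Q)" and 2: "prov L (Imp Q R)"
  have "wf_fm L P" using prov_wf[OF 1] by simp
  then have "prov L (Imp P (Imp Q R))" using prov_weaken 2 by blast
  then show ?thesis using prov_mp_under 1 by blast
qed

lemma wf_foldr_Imp: "wf_fm L (foldr Imp as X) \<longleftrightarrow> (\<forall>a\<in>set as. wf_fm L a) \<and> wf_fm L X"
  by (induction as) auto

lemma prov_foldr_weaken: "prov L X \<Longrightarrow> \<forall>a\<in>set as. wf_fm L a \<Longrightarrow> prov L (foldr Imp as X)"
  by (induction as) (auto intro: prov_weaken)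

lemma prov_foldr_dist: "wf_fm L X \<Longrightarrow> wf_fm L Y \<Longrightarrow> \<forall>a\<in>set as. wf_fm L a \<Longrightarrow>
  prov L (Imp (foldr Imp as (Imp X Y)) (Imp (foldr Imp as X) (foldr Imp as Y)))"
proof (induction as)
  case Nil
  then show ?case using prov_imp_refl[of L "Imp X Y"] by simp
next
  case (Cons a as)
  let ?A = "foldr Imp as (Imp X Y)" and ?B = "foldr Imp as X" and ?C = "foldr Imp as Y"
  have IH: "prov L (Imp ?A (Imp ?B ?C))" using Cons by simp
  have wa: "wf_fm L a" "wf_fm L ?A" "wf_fm L ?B" "wf_fm L ?C" using Cons.prems by (auto simp: wf_foldr_Imp)
  have s1: "prov L (Imp a (Imp ?A (Imp ?B ?C)))" using prov_weaken[OF IH wa(1)] .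
  have "prov L (Imp (Imp a (Imp ?A (Imp ?B ?C))) (Imp (Imp a ?A) (Imp a (Imp ?B ?C))))"
    by (rule ax2) (use wa in auto)
  then have s2: "prov L (Imp (Imp a ?A) (Imp a (Imp ?B ?C)))"
    using mp s1 by blast
  have s3: "prov L (Imp (Imp a (Imp ?B ?C)) (Imp (Imp a ?B) (Imp a ?C)))"
    by (rule ax2) (use wa in auto)
  show ?case using prov_imp_trans[OF s2 s3] by simp
qed

lemma prov_foldr_mp: "prov L (foldr Imp as (Imp X Y)) \<Longrightarrow> prov L (foldr Imp as X) \<Longrightarrow> prov L (foldr Imp as Y)"
proof -
  assume 1: "prov L (foldr Imp as (Imp X Y))" and 2: "prov L (foldr Imp as X)"
  have "wf_fm L X" "wf_fm L Y" "\<forall>a\<in>set as. wf_fm L a" using prov_wf[OF 1] by (auto simp: wf_foldr_Imp)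
  then show ?thesis using mp[OF mp[OF prov_foldr_dist 1] 2] by blast
qed

lemma prov_imp_foldr: "wf_fm L Z \<Longrightarrow> \<forall>b\<in>set bs. wf_fm L b \<Longrightarrow> prov L (Imp Z (foldr Imp bs Z))"
proof (induction bs)
  case Nil
  then show ?case using prov_imp_refl by simp
next
  case (Cons b bs)
  then have "prov L (Imp (foldr Imp bs Z) (Imp b (foldr Imp bs Z)))"
    by (intro ax1) (auto simp: wf_foldr_Imp)
  moreover have "prov L (Imp Z (foldr Imp bs Z))" using Cons by simp
  ultimately show ?case using prov_imp_trans by simp
qed

lemma thm_of_mp:
  assumes T: "\<forall>a\<in>snd T. wf_fm (fst T) a"
    and 1: "thm_of T (Imp p q)" and 2: "thm_of T p"
  shows "thm_of T q"
proof -
  obtain as1 where a1: "set as1 \<subseteq> snd T" "prov (fst T) (foldr Imp as1 (Imp p q))"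
    using 1 unfolding thm_of_def by blast
  obtain as2 where a2: "set as2 \<subseteq> snd T" "prov (fst T) (foldr Imp as2 p)"
    using 2 unfolding thm_of_def by blast
  have w1: "\<forall>a\<in>set as1. wf_fm (fst T) a" and w2: "\<forall>a\<in>set as2. wf_fm (fst T) a"
    using a1 a2 T by auto
  have wpq: "wf_fm (fst T) (Imp p q)" using prov_wf[OF a1(2)] by (simp add: wf_foldr_Imp)
  have A: "prov (fst T) (foldr Imp as1 (foldr Imp as2 p))" using prov_foldr_weaken[OF a2(2) w1] .
  have B0: "prov (fst T) (foldr Imp as1 (Imp (Imp p q) (foldr Imp as2 (Imp p q))))"
    using prov_foldr_weaken[OF prov_imp_foldr[OF wpq w2] w1] .
  have B: "prov (fst T) (foldr Imp as1 (foldr Imp as2 (Imp p q)))" using prov_foldr_mp[OF B0 a1(2)] .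
  have "prov (fst T) (foldr Imp (as1 @ as2) q)"
    using prov_foldr_mp[of "fst T" "as1 @ as2" p q] A B by simp
  then show ?thesis unfolding thm_of_def using a1 a2 by (intro exI[of _ "as1 @ as2"]) auto
qed

section \<open>Proof search in a recursively axiomatized theory\<close>

abbreviation pair :: "nat \<Rightarrow> nat \<Rightarrow> nat" where "pair a b \<equiv> prod_encode (a, b)"
abbreviation quad :: "nat \<Rightarrow> nat \<Rightarrow> nat \<Rightarrow> nat \<Rightarrow> nat" where "quad a b x y \<equiv> pair a (pair b (pair x y))"
abbreviation code_Imp :: "nat \<Rightarrow> nat \<Rightarrow> nat" where "code_Imp a b \<equiv> pair 3 (pair a b)"
abbreviation code_Neg :: "nat \<Rightarrow> nat" where "code_Neg a \<equiv> code_Imp a (pair 0 0)"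
abbreviation code_tms :: "tm list \<Rightarrow> nat" where "code_tms ts \<equiv> list_encode (map enc_tm ts)"

lemma enc_tm_eq_pair:
  "enc_tm t = pair a b \<longleftrightarrow> (a = 0 \<and> t = Var b) \<or> (a = 1 \<and> (\<exists>f ts. t = Fn f ts \<and> b = pair f (code_tms ts)))"
  "pair a b = enc_tm t \<longleftrightarrow> (a = 0 \<and> t = Var b) \<or> (a = 1 \<and> (\<exists>f ts. t = Fn f ts \<and> b = pair f (code_tms ts)))"
  by (cases t; auto)+

lemma code_tms_eq:
  "code_tms ts = 0 \<longleftrightarrow> ts = []" "0 = code_tms ts \<longleftrightarrow> ts = []"
  "code_tms ts = Suc x \<longleftrightarrow> (\<exists>t ts'. ts = t # ts' \<and> x = pair (enc_tm t) (code_tms ts'))"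
  "Suc x = code_tms ts \<longleftrightarrow> (\<exists>t ts'. ts = t # ts' \<and> x = pair (enc_tm t) (code_tms ts'))"
  by (cases ts; auto)+

lemma enc_fm_eq_pair:
  "enc_fm p = pair a b \<longleftrightarrow>
     (a = 0 \<and> b = 0 \<and> p = Bot) \<or>
     (a = 1 \<and> (\<exists>s t. p = Eq s t \<and> b = pair (enc_tm s) (enc_tm t))) \<or>
     (a = 2 \<and> (\<exists>r ts. p = Rel r ts \<and> b = pair r (code_tms ts))) \<or>
     (a = 3 \<and> (\<exists>p1 p2. p = Imp p1 p2 \<and> b = pair (enc_fm p1) (enc_fm p2))) \<or>
     (a = 4 \<and> (\<exists>p1. p = All p1 \<and> b = enc_fm p1))"
  "pair a b = enc_fm p \<longleftrightarrow>
     (a = 0 \<and> b = 0 \<and> p = Bot) \<or>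
     (a = 1 \<and> (\<exists>s t. p = Eq s t \<and> b = pair (enc_tm s) (enc_tm t))) \<or>
     (a = 2 \<and> (\<exists>r ts. p = Rel r ts \<and> b = pair r (code_tms ts))) \<or>
     (a = 3 \<and> (\<exists>p1 p2. p = Imp p1 p2 \<and> b = pair (enc_fm p1) (enc_fm p2))) \<or>
     (a = 4 \<and> (\<exists>p1. p = All p1 \<and> b = enc_fm p1))"
  by (cases p; auto)+

text \<open>Turning equations with a code on one side into equations between projections lets the
  simplifier eliminate the existential quantifiers in the rule definitions below, which then
  become visibly decidable.\<close>

lemma code_eq_projections:
  "z = pair a b \<longleftrightarrow> pfst z = a \<and> psnd z = b"
  "pair a b = z \<longleftrightarrow> pfst z = a \<and> psnd z = b"
  "z = Suc w \<longleftrightarrow> 0 < z \<and> z - 1 = w"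
  "Suc w = z \<longleftrightarrow> 0 < z \<and> z - 1 = w"
  using prod_encode_pfst_psnd[of z] by auto

lemma enc_Neg: "enc_fm (Neg p) = code_Neg (enc_fm p)"
  by (simp add: Neg_def)

abbreviation code_And :: "nat \<Rightarrow> nat \<Rightarrow> nat" where "code_And a b \<equiv> code_Neg (code_Imp a (code_Neg b))"
abbreviation code_Ex :: "nat \<Rightarrow> nat" where "code_Ex a \<equiv> code_Neg (pair 4 (code_Neg a))"

lemma enc_And: "enc_fm (And p q) = code_And (enc_fm p) (enc_fm q)"
  by (simp add: And_def Neg_def)

lemma enc_Ex: "enc_fm (Ex p) = code_Ex (enc_fm p)"
  by (simp add: Ex_def Neg_def)

lemma ax_inst_var_inst: "wf_fm L p \<Longrightarrow> wf_tm L t \<Longrightarrow> prov L (Imp (All p) (subst_fm (var_inst 0 t) p))"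
  unfolding inst_var_inst[symmetric] by (rule ax_inst)

lemma ax_vac_var_shift: "wf_fm L p \<Longrightarrow> prov L (Imp p (All (subst_fm (var_shift (Suc 0) 0) p)))"
  using ax_vac[of L p] unfolding lift_var_shift by simp

lemma ax_leib_var_inst: "wf_fm L p \<Longrightarrow> wf_tm L s \<Longrightarrow> wf_tm L t \<Longrightarrow>
   prov L (Imp (Eq s t) (Imp (subst_fm (var_inst 0 s) p) (subst_fm (var_inst 0 t) p)))"
  unfolding inst_var_inst[symmetric] by (rule ax_leib)

lemma ax3_Imp: "wf_fm L p \<Longrightarrow> prov L (Imp (Imp (Imp p Bot) Bot) p)"
  using ax3[of L p] unfolding Neg_def .

locale proof_search =
  fixes L :: lang and Ax :: "fm set" and \<phi> :: "nat \<Rightarrow> fm"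
  assumes recursive_L: "recursive_lang L"
    and recursive_Ax: "recursive_set (enc_fm ` Ax)"
    and computable_\<phi>: "computable 1 (\<lambda>xs. enc_fm (\<phi> (xs ! 0)))"
begin

lemma decidable_fun_arity: "computable n f \<Longrightarrow> computable n g \<Longrightarrow> decidable n (\<lambda>xs. fst L (f xs) = Some (g xs))"
  using decidable_mem[of "{pair f k | f k. fst L f = Some k}" n "\<lambda>xs. pair (f xs) (g xs)"] recursive_L
  by (simp add: recursive_lang_def computable_prod_encode)

lemma decidable_rel_arity: "computable n f \<Longrightarrow> computable n g \<Longrightarrow> decidable n (\<lambda>xs. snd L (f xs) = Some (g xs))"
  using decidable_mem[of "{pair r k | r k. snd L r = Some k}" n "\<lambda>xs. pair (f xs) (g xs)"] recursive_L
  by (simp add: recursive_lang_def computable_prod_encode)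

lemma computable_enc_\<phi>: "computable n f \<Longrightarrow> computable n (\<lambda>xs. enc_fm (\<phi> (f xs)))"
  using computable_comp1[OF computable_\<phi>] by simp

lemmas decidable_intros = decidable_or decidable_and decidable_not decidable_imp decidable_eq
  decidable_less decidable_le computable_if computable_prod_encode computable_pfst computable_psnd
  computable_code_nth computable_Suc computable_add computable_sub computable_const computable_proj
  decidable_fun_arity decidable_rel_arity decidable_mem[OF recursive_Ax] computable_enc_\<phi>

text \<open>Judgements are coded as pairs \<open>\<langle>tag, x\<rangle>\<close>. The tags: 1--3 well-formed terms, term lists
  (paired with their length) and formulas; 4--6 shifting a term, term list or formula by
  \<open>var_shift s d\<close>; 7--9 instantiating by \<open>var_inst d t\<close>; 10 provability; 11 \<open>\<langle>foldr Imp axs p, p\<rangle>\<close>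
  for axioms \<open>axs\<close>; 12 theoremhood; 13 the answer \<open>\<langle>n, 1\<rangle>\<close> or \<open>\<langle>n, 0\<rangle>\<close> to the question
  whether \<open>\<phi> n\<close> or its negation is a theorem. The rules never check that the instantiating
  term \<open>t\<close> of tags 7--9 is a code, so those judgements only claim something when it is.\<close>

definition wf_rule :: "nat \<Rightarrow> nat \<Rightarrow> bool" where
  "wf_rule c P \<longleftrightarrow>
    (\<exists>i. c = pair 1 (pair 0 i)) \<or>
    (\<exists>f l k. c = pair 1 (pair 1 (pair f l)) \<and> code_nth P 0 = pair 2 (pair l k) \<and> fst L f = Some k) \<or>
    c = pair 2 (pair 0 0) \<or>
    (\<exists>a l k. c = pair 2 (pair (Suc (pair a l)) (Suc k)) \<and> code_nth P 0 = pair 1 a \<and> code_nth P 1 = pair 2 (pair l k)) \<or>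
    c = pair 3 (pair 0 0) \<or>
    (\<exists>a b. c = pair 3 (pair 1 (pair a b)) \<and> code_nth P 0 = pair 1 a \<and> code_nth P 1 = pair 1 b) \<or>
    (\<exists>r l k. c = pair 3 (pair 2 (pair r l)) \<and> code_nth P 0 = pair 2 (pair l k) \<and> snd L r = Some k) \<or>
    (\<exists>a b. c = pair 3 (pair 3 (pair a b)) \<and> code_nth P 0 = pair 3 a \<and> code_nth P 1 = pair 3 b) \<or>
    (\<exists>a. c = pair 3 (pair 4 a) \<and> code_nth P 0 = pair 3 a)"

definition shift_rule :: "nat \<Rightarrow> nat \<Rightarrow> bool" where
  "shift_rule c P \<longleftrightarrow>
    (\<exists>s d i. c = pair 4 (quad s d (pair 0 i) (pair 0 (if i < d then i else i + s)))) \<or>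
    (\<exists>s d f l l'. c = pair 4 (quad s d (pair 1 (pair f l)) (pair 1 (pair f l'))) \<and> code_nth P 0 = pair 5 (quad s d l l')) \<or>
    (\<exists>s d. c = pair 5 (quad s d 0 0)) \<or>
    (\<exists>s d a l a' l'. c = pair 5 (quad s d (Suc (pair a l)) (Suc (pair a' l'))) \<and>
       code_nth P 0 = pair 4 (quad s d a a') \<and> code_nth P 1 = pair 5 (quad s d l l')) \<or>
    (\<exists>s d. c = pair 6 (quad s d (pair 0 0) (pair 0 0))) \<or>
    (\<exists>s d a b a' b'. c = pair 6 (quad s d (pair 1 (pair a b)) (pair 1 (pair a' b'))) \<and>
       code_nth P 0 = pair 4 (quad s d a a') \<and> code_nth P 1 = pair 4 (quad s d b b')) \<or>
    (\<exists>s d r l l'. c = pair 6 (quad s d (pair 2 (pair r l)) (pair 2 (pair r l'))) \<and> code_nth P 0 = pair 5 (quad s d l l')) \<or>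
    (\<exists>s d a b a' b'. c = pair 6 (quad s d (pair 3 (pair a b)) (pair 3 (pair a' b'))) \<and>
       code_nth P 0 = pair 6 (quad s d a a') \<and> code_nth P 1 = pair 6 (quad s d b b')) \<or>
    (\<exists>s d a a'. c = pair 6 (quad s d (pair 4 a) (pair 4 a')) \<and> code_nth P 0 = pair 6 (quad s (Suc d) a a'))"

definition inst_rule :: "nat \<Rightarrow> nat \<Rightarrow> bool" where
  "inst_rule c P \<longleftrightarrow>
    (\<exists>d t i. i \<noteq> d \<and> c = pair 7 (quad d t (pair 0 i) (pair 0 (if i < d then i else i - 1)))) \<or>
    (\<exists>d t y. c = pair 7 (quad d t (pair 0 d) y) \<and> code_nth P 0 = pair 4 (quad d 0 t y)) \<or>
    (\<exists>d t f l l'. c = pair 7 (quad d t (pair 1 (pair f l)) (pair 1 (pair f l'))) \<and> code_nth P 0 = pair 8 (quad d t l l')) \<or>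
    (\<exists>d t. c = pair 8 (quad d t 0 0)) \<or>
    (\<exists>d t a l a' l'. c = pair 8 (quad d t (Suc (pair a l)) (Suc (pair a' l'))) \<and>
       code_nth P 0 = pair 7 (quad d t a a') \<and> code_nth P 1 = pair 8 (quad d t l l')) \<or>
    (\<exists>d t. c = pair 9 (quad d t (pair 0 0) (pair 0 0))) \<or>
    (\<exists>d t a b a' b'. c = pair 9 (quad d t (pair 1 (pair a b)) (pair 1 (pair a' b'))) \<and>
       code_nth P 0 = pair 7 (quad d t a a') \<and> code_nth P 1 = pair 7 (quad d t b b')) \<or>
    (\<exists>d t r l l'. c = pair 9 (quad d t (pair 2 (pair r l)) (pair 2 (pair r l'))) \<and> code_nth P 0 = pair 8 (quad d t l l')) \<or>
    (\<exists>d t a b a' b'. c = pair 9 (quad d t (pair 3 (pair a b)) (pair 3 (pair a' b'))) \<and>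
       code_nth P 0 = pair 9 (quad d t a a') \<and> code_nth P 1 = pair 9 (quad d t b b')) \<or>
    (\<exists>d t a a'. c = pair 9 (quad d t (pair 4 a) (pair 4 a')) \<and> code_nth P 0 = pair 9 (quad (Suc d) t a a'))"

definition calculus_rule :: "nat \<Rightarrow> nat \<Rightarrow> bool" where
  "calculus_rule c P \<longleftrightarrow>
    (\<exists>a b. c = pair 10 (code_Imp a (code_Imp b a)) \<and> code_nth P 0 = pair 3 a \<and> code_nth P 1 = pair 3 b) \<or>
    (\<exists>a b e. c = pair 10 (code_Imp (code_Imp a (code_Imp b e)) (code_Imp (code_Imp a b) (code_Imp a e))) \<and>
       code_nth P 0 = pair 3 a \<and> code_nth P 1 = pair 3 b \<and> code_nth P 2 = pair 3 e) \<or>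
    (\<exists>a. c = pair 10 (code_Imp (code_Neg (code_Neg a)) a) \<and> code_nth P 0 = pair 3 a) \<or>
    (\<exists>a t b. c = pair 10 (code_Imp (pair 4 a) b) \<and>
       code_nth P 0 = pair 3 a \<and> code_nth P 1 = pair 1 t \<and> code_nth P 2 = pair 9 (quad 0 t a b)) \<or>
    (\<exists>a b. c = pair 10 (code_Imp a (pair 4 b)) \<and> code_nth P 0 = pair 3 a \<and> code_nth P 1 = pair 6 (quad 1 0 a b)) \<or>
    (\<exists>a b. c = pair 10 (code_Imp (pair 4 (code_Imp a b)) (code_Imp (pair 4 a) (pair 4 b))) \<and>
       code_nth P 0 = pair 3 a \<and> code_nth P 1 = pair 3 b) \<or>
    (\<exists>t. c = pair 10 (pair 1 (pair t t)) \<and> code_nth P 0 = pair 1 t) \<or>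
    (\<exists>a s t x y. c = pair 10 (code_Imp (pair 1 (pair s t)) (code_Imp x y)) \<and>
       code_nth P 0 = pair 3 a \<and> code_nth P 1 = pair 1 s \<and> code_nth P 2 = pair 1 t \<and>
       code_nth P 3 = pair 9 (quad 0 s a x) \<and> code_nth P 4 = pair 9 (quad 0 t a y)) \<or>
    (\<exists>a b. c = pair 10 b \<and> code_nth P 0 = pair 10 (code_Imp a b) \<and> code_nth P 1 = pair 10 a) \<or>
    (\<exists>a. c = pair 10 (pair 4 a) \<and> code_nth P 0 = pair 10 a)"

definition theorem_rule :: "nat \<Rightarrow> nat \<Rightarrow> bool" where
  "theorem_rule c P \<longleftrightarrow>
    (\<exists>p. c = pair 11 (pair p p) \<and> code_nth P 0 = pair 3 p) \<or>
    (\<exists>a q p. c = pair 11 (pair (code_Imp a q) p) \<and> code_nth P 0 = pair 11 (pair q p) \<and> a \<in> enc_fm ` Ax) \<or>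
    (\<exists>p q. c = pair 12 p \<and> code_nth P 0 = pair 10 q \<and> code_nth P 1 = pair 11 (pair q p))"

definition answer_rule :: "nat \<Rightarrow> nat \<Rightarrow> bool" where
  "answer_rule c P \<longleftrightarrow>
    (\<exists>n. c = pair 13 (pair n 1) \<and> code_nth P 0 = pair 12 (enc_fm (\<phi> n))) \<or>
    (\<exists>n. c = pair 13 (pair n 0) \<and> code_nth P 0 = pair 12 (code_Neg (enc_fm (\<phi> n))))"

definition search_rule :: "nat \<Rightarrow> nat \<Rightarrow> bool" where
  "search_rule c P \<longleftrightarrow> wf_rule c P \<or> shift_rule c P \<or> inst_rule c P \<or> calculus_rule c P \<or>
     theorem_rule c P \<or> answer_rule c P"

lemma search_rule_wfI: "wf_rule c P \<Longrightarrow> search_rule c P"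
  and search_rule_shiftI: "shift_rule c P \<Longrightarrow> search_rule c P"
  and search_rule_instI: "inst_rule c P \<Longrightarrow> search_rule c P"
  and search_rule_calculusI: "calculus_rule c P \<Longrightarrow> search_rule c P"
  and search_rule_theoremI: "theorem_rule c P \<Longrightarrow> search_rule c P"
  and search_rule_answerI: "answer_rule c P \<Longrightarrow> search_rule c P"
  by (simp_all add: search_rule_def)

lemma decidable_search_rule: "decidable 2 (\<lambda>xs. search_rule (xs ! 0) (xs ! 1))"
  unfolding search_rule_def wf_rule_def shift_rule_def inst_rule_def calculus_rule_def theorem_rule_def answer_rule_def
  by (simp add: code_eq_projections) (intro decidable_intros; simp)

definition judgement_holds :: "nat \<Rightarrow> nat \<Rightarrow> bool" where
  "judgement_holds k x \<longleftrightarrow>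
    (if k = 1 then \<exists>t. x = enc_tm t \<and> wf_tm L t
    else if k = 2 then \<exists>ts. x = pair (code_tms ts) (length ts) \<and> (\<forall>t\<in>set ts. wf_tm L t)
    else if k = 3 then \<exists>p. x = enc_fm p \<and> wf_fm L p
    else if k = 4 then \<exists>s d t. x = quad s d (enc_tm t) (enc_tm (subst_tm (var_shift s d) t))
    else if k = 5 then \<exists>s d ts. x = quad s d (code_tms ts) (code_tms (map (subst_tm (var_shift s d)) ts))
    else if k = 6 then \<exists>s d p. x = quad s d (enc_fm p) (enc_fm (subst_fm (var_shift s d) p))
    else if k = 7 then \<exists>d t a b. x = quad d t a b \<and>
      (\<forall>t0. t = enc_tm t0 \<longrightarrow> (\<exists>u. a = enc_tm u \<and> b = enc_tm (subst_tm (var_inst d t0) u)))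
    else if k = 8 then \<exists>d t a b. x = quad d t a b \<and>
      (\<forall>t0. t = enc_tm t0 \<longrightarrow> (\<exists>ts. a = code_tms ts \<and> b = code_tms (map (subst_tm (var_inst d t0)) ts)))
    else if k = 9 then \<exists>d t a b. x = quad d t a b \<and>
      (\<forall>t0. t = enc_tm t0 \<longrightarrow> (\<exists>p. a = enc_fm p \<and> b = enc_fm (subst_fm (var_inst d t0) p)))
    else if k = 10 then \<exists>p. x = enc_fm p \<and> prov L p
    else if k = 11 then \<exists>axs p. set axs \<subseteq> Ax \<and> x = pair (enc_fm (foldr Imp axs p)) (enc_fm p)
    else if k = 12 then \<exists>p. x = enc_fm p \<and> thm_of (L, Ax) p
    else if k = 13 then \<exists>n. (x = pair n 1 \<and> thm_of (L, Ax) (\<phi> n)) \<or> (x = pair n 0 \<and> thm_of (L, Ax) (Neg (\<phi> n)))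
    else True)"

definition holds_code :: "nat \<Rightarrow> bool" where
  "holds_code c \<longleftrightarrow> judgement_holds (pfst c) (psnd c)"

lemma holds_code_pair[simp]: "holds_code (pair k x) \<longleftrightarrow> judgement_holds k x"
  by (simp add: holds_code_def)

lemma judgement_holds_simps[simp]:
  "judgement_holds 0 x"
  "judgement_holds (Suc 0) x \<longleftrightarrow> (\<exists>t. x = enc_tm t \<and> wf_tm L t)"
  "judgement_holds 1 x \<longleftrightarrow> (\<exists>t. x = enc_tm t \<and> wf_tm L t)"
  "judgement_holds 2 x \<longleftrightarrow> (\<exists>ts. x = pair (code_tms ts) (length ts) \<and> (\<forall>t\<in>set ts. wf_tm L t))"
  "judgement_holds 3 x \<longleftrightarrow> (\<exists>p. x = enc_fm p \<and> wf_fm L p)"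
  "judgement_holds 4 x \<longleftrightarrow> (\<exists>s d t. x = quad s d (enc_tm t) (enc_tm (subst_tm (var_shift s d) t)))"
  "judgement_holds 5 x \<longleftrightarrow> (\<exists>s d ts. x = quad s d (code_tms ts) (code_tms (map (subst_tm (var_shift s d)) ts)))"
  "judgement_holds 6 x \<longleftrightarrow> (\<exists>s d p. x = quad s d (enc_fm p) (enc_fm (subst_fm (var_shift s d) p)))"
  "judgement_holds 7 x \<longleftrightarrow> (\<exists>d t a b. x = quad d t a b \<and>
      (\<forall>t0. t = enc_tm t0 \<longrightarrow> (\<exists>u. a = enc_tm u \<and> b = enc_tm (subst_tm (var_inst d t0) u))))"
  "judgement_holds 8 x \<longleftrightarrow> (\<exists>d t a b. x = quad d t a b \<and>
      (\<forall>t0. t = enc_tm t0 \<longrightarrow> (\<exists>ts. a = code_tms ts \<and> b = code_tms (map (subst_tm (var_inst d t0)) ts))))"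
  "judgement_holds 9 x \<longleftrightarrow> (\<exists>d t a b. x = quad d t a b \<and>
      (\<forall>t0. t = enc_tm t0 \<longrightarrow> (\<exists>p. a = enc_fm p \<and> b = enc_fm (subst_fm (var_inst d t0) p))))"
  "judgement_holds 10 x \<longleftrightarrow> (\<exists>p. x = enc_fm p \<and> prov L p)"
  "judgement_holds 11 x \<longleftrightarrow> (\<exists>axs p. set axs \<subseteq> Ax \<and> x = pair (enc_fm (foldr Imp axs p)) (enc_fm p))"
  "judgement_holds 12 x \<longleftrightarrow> (\<exists>p. x = enc_fm p \<and> thm_of (L, Ax) p)"
  "judgement_holds 13 x \<longleftrightarrow>
     (\<exists>n. (x = pair n 1 \<and> thm_of (L, Ax) (\<phi> n)) \<or> (x = pair n 0 \<and> thm_of (L, Ax) (Neg (\<phi> n))))"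
  by (simp_all add: judgement_holds_def)

lemmas code_simps = enc_tm_eq_pair enc_fm_eq_pair code_tms_eq var_shift_def var_inst_def up_var_shift up_var_inst

lemmas prov_axioms = ax1 ax2 ax3_Imp ax_inst_var_inst ax_vac_var_shift ax_dist ax_refl ax_leib_var_inst

lemma wf_rule_sound:
  assumes "wf_rule c P" and S: "\<And>k. holds_code (code_nth P k)"
  shows "holds_code c"
  using assms(1) S[of 0] S[of 1] unfolding wf_rule_def by (auto simp: code_simps)

lemma shift_rule_sound:
  assumes "shift_rule c P" and S: "\<And>k. holds_code (code_nth P k)"
  shows "holds_code c"
  using assms(1) S[of 0] S[of 1] unfolding shift_rule_def by (auto simp: code_simps)

lemma inst_rule_sound:
  assumes "inst_rule c P" and S: "\<And>k. holds_code (code_nth P k)"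
  shows "holds_code c"
  using assms(1) S[of 0] S[of 1] unfolding inst_rule_def by (auto simp: code_simps)

lemma calculus_rule_sound:
  assumes "calculus_rule c P" and S: "\<And>k. holds_code (code_nth P k)"
  shows "holds_code c"
  using assms(1) S[of 0] S[of 1] S[of 2] S[of 3] S[of 4] unfolding calculus_rule_def
  by (auto simp: code_simps intro: prov_axioms; blast intro: prov_axioms prov.mp prov.gen)

lemma theorem_rule_sound:
  assumes "theorem_rule c P" and S: "\<And>k. holds_code (code_nth P k)"
  shows "holds_code c"
  using assms(1) unfolding theorem_rule_def
proof (elim disjE exE conjE)
  fix p assume c: "c = pair 11 (pair p p)" and "code_nth P 0 = pair 3 p"
  then obtain q where "p = enc_fm q" using S[of 0] by auto
  then show ?thesis unfolding c by (simp, intro exI[of _ "[]"]) auto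
next
  fix a q p assume c: "c = pair 11 (pair (code_Imp a q) p)"
    and "code_nth P 0 = pair 11 (pair q p)" and "a \<in> enc_fm ` Ax"
  then obtain ax axs p' where "ax \<in> Ax" "a = enc_fm ax" "set axs \<subseteq> Ax"
    "q = enc_fm (foldr Imp axs p')" "p = enc_fm p'"
    using S[of 0] by auto
  then show ?thesis unfolding c by (simp, intro exI[of _ "ax # axs"] exI[of _ p']) auto
next
  fix p q assume c: "c = pair 12 p"
    and "code_nth P 0 = pair 10 q" "code_nth P 1 = pair 11 (pair q p)"
  then obtain axs p' where "set axs \<subseteq> Ax" "prov L (foldr Imp axs p')" "p = enc_fm p'"
    using S[of 0] S[of 1] by auto
  then show ?thesis unfolding c by (auto simp: thm_of_def)
qed

lemma answer_rule_sound:
  assumes "answer_rule c P" and S: "\<And>k. holds_code (code_nth P k)"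
  shows "holds_code c"
  using assms(1) S[of 0] unfolding answer_rule_def by (auto simp: enc_Neg[symmetric])

lemma search_rule_sound: "search_rule c P \<Longrightarrow> (\<And>k. holds_code (code_nth P k)) \<Longrightarrow> holds_code c"
  unfolding search_rule_def
  using wf_rule_sound shift_rule_sound inst_rule_sound calculus_rule_sound theorem_rule_sound answer_rule_sound
  by blast

lemma derivable_sound: "derivable search_rule c \<Longrightarrow> holds_code c"
proof (induction rule: derivable.induct)
  case derivable_dummy
  then show ?case by (simp add: holds_code_def)
next
  case (derivable_step P c)
  then show ?case using search_rule_sound by blast
qed

lemma derivable_wf_tms: "\<forall>t\<in>set ts. derivable search_rule (pair 1 (enc_tm t)) \<Longrightarrow> derivable search_rule (pair 2 (pair (code_tms ts) (length ts)))"
proof (induction ts)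
  case Nil
  show ?case by (intro derivable_by_rule[where ps="[]"] search_rule_wfI) (auto simp: wf_rule_def)
next
  case (Cons t ts)
  show ?case
    by (intro derivable_by_rule[where ps="[pair 1 (enc_tm t), pair 2 (pair (code_tms ts) (length ts))]"] search_rule_wfI)
       (use Cons in \<open>auto simp: wf_rule_def code_nth_list\<close>)
qed

lemma derivable_wf_tm: "wf_tm L t \<Longrightarrow> derivable search_rule (pair 1 (enc_tm t))"
proof (induction t)
  case (Var i)
  show ?case by (intro derivable_by_rule[where ps="[]"] search_rule_wfI) (auto simp: wf_rule_def)
next
  case (Fn f ts)
  have "derivable search_rule (pair 2 (pair (code_tms ts) (length ts)))" using Fn by (intro derivable_wf_tms) auto
  then show ?case
    by (intro derivable_by_rule[where ps="[pair 2 (pair (code_tms ts) (length ts))]"] search_rule_wfI)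
       (use Fn in \<open>auto simp: wf_rule_def code_nth_list\<close>)
qed

lemma derivable_wf_tm': "wf_tm L t \<Longrightarrow> derivable search_rule (pair (Suc 0) (enc_tm t))"
  using derivable_wf_tm by simp

lemma derivable_wf_fm: "wf_fm L p \<Longrightarrow> derivable search_rule (pair 3 (enc_fm p))"
proof (induction p)
  case Bot
  show ?case by (intro derivable_by_rule[where ps="[]"] search_rule_wfI) (auto simp: wf_rule_def)
next
  case (Eq s t)
  then show ?case
    by (intro derivable_by_rule[where ps="[pair 1 (enc_tm s), pair 1 (enc_tm t)]"] search_rule_wfI)
      (auto simp: wf_rule_def code_nth_list intro: derivable_wf_tm derivable_wf_tm')
next
  case (Rel r ts)
  have "derivable search_rule (pair 2 (pair (code_tms ts) (length ts)))" using Rel by (intro derivable_wf_tms) (auto intro: derivable_wf_tm derivable_wf_tm')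
  then show ?case
    by (intro derivable_by_rule[where ps="[pair 2 (pair (code_tms ts) (length ts))]"] search_rule_wfI)
       (use Rel in \<open>auto simp: wf_rule_def code_nth_list\<close>)
next
  case (Imp p q)
  then show ?case
    by (intro derivable_by_rule[where ps="[pair 3 (enc_fm p), pair 3 (enc_fm q)]"] search_rule_wfI)
      (auto simp: wf_rule_def code_nth_list)
next
  case (All p)
  then show ?case
    by (intro derivable_by_rule[where ps="[pair 3 (enc_fm p)]"] search_rule_wfI)
      (auto simp: wf_rule_def code_nth_list)
qed

lemma derivable_shift_tms: "\<forall>t\<in>set ts. derivable search_rule (pair 4 (quad s d (enc_tm t) (enc_tm (subst_tm (var_shift s d) t)))) \<Longrightarrow>
   derivable search_rule (pair 5 (quad s d (code_tms ts) (code_tms (map (subst_tm (var_shift s d)) ts))))"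
proof (induction ts)
  case Nil
  show ?case by (intro derivable_by_rule[where ps="[]"] search_rule_shiftI) (auto simp: shift_rule_def)
next
  case (Cons t ts)
  show ?case
    by (intro derivable_by_rule[where ps="[pair 4 (quad s d (enc_tm t) (enc_tm (subst_tm (var_shift s d) t))),
            pair 5 (quad s d (code_tms ts) (code_tms (map (subst_tm (var_shift s d)) ts)))]"] search_rule_shiftI)
       (use Cons in \<open>auto simp: shift_rule_def code_nth_list\<close>)
qed

lemma derivable_shift_tm: "derivable search_rule (pair 4 (quad s d (enc_tm t) (enc_tm (subst_tm (var_shift s d) t))))"
proof (induction t)
  case (Var i)
  show ?case by (intro derivable_by_rule[where ps="[]"] search_rule_shiftI) (auto simp: shift_rule_def var_shift_def)
next
  case (Fn f ts)
  have "derivable search_rule (pair 5 (quad s d (code_tms ts) (code_tms (map (subst_tm (var_shift s d)) ts))))" using Fn by (intro derivable_shift_tms) auto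
  then show ?case
    by (intro derivable_by_rule[where ps="[pair 5 (quad s d (code_tms ts) (code_tms (map (subst_tm (var_shift s d)) ts)))]"] search_rule_shiftI)
      (auto simp: shift_rule_def code_nth_list)
qed

lemma derivable_shift_fm: "derivable search_rule (pair 6 (quad s d (enc_fm p) (enc_fm (subst_fm (var_shift s d) p))))"
proof (induction p arbitrary: d)
  case Bot
  show ?case by (intro derivable_by_rule[where ps="[]"] search_rule_shiftI) (auto simp: shift_rule_def)
next
  case (Eq a b)
  show ?case
    by (intro derivable_by_rule[where ps="[pair 4 (quad s d (enc_tm a) (enc_tm (subst_tm (var_shift s d) a))),
          pair 4 (quad s d (enc_tm b) (enc_tm (subst_tm (var_shift s d) b)))]"] search_rule_shiftI)
       (auto simp: shift_rule_def code_nth_list intro: derivable_shift_tm)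
next
  case (Rel r ts)
  have "derivable search_rule (pair 5 (quad s d (code_tms ts) (code_tms (map (subst_tm (var_shift s d)) ts))))" by (intro derivable_shift_tms) (auto intro: derivable_shift_tm)
  then show ?case
    by (intro derivable_by_rule[where ps="[pair 5 (quad s d (code_tms ts) (code_tms (map (subst_tm (var_shift s d)) ts)))]"] search_rule_shiftI)
      (auto simp: shift_rule_def code_nth_list)
next
  case (Imp p q)
  show ?case
    by (intro derivable_by_rule[where ps="[pair 6 (quad s d (enc_fm p) (enc_fm (subst_fm (var_shift s d) p))),
          pair 6 (quad s d (enc_fm q) (enc_fm (subst_fm (var_shift s d) q)))]"] search_rule_shiftI)
       (auto simp: shift_rule_def code_nth_list intro: Imp.IH)
next
  case (All p)
  show ?case
    by (intro derivable_by_rule[where ps="[pair 6 (quad s (Suc d) (enc_fm p) (enc_fm (subst_fm (var_shift s (Suc d)) p)))]"] search_rule_shiftI)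
       (auto simp: shift_rule_def code_nth_list up_var_shift intro: All.IH)
qed

lemma derivable_inst_tms: "\<forall>t\<in>set ts. derivable search_rule (pair 7 (quad d (enc_tm t0) (enc_tm t) (enc_tm (subst_tm (var_inst d t0) t)))) \<Longrightarrow>
   derivable search_rule (pair 8 (quad d (enc_tm t0) (code_tms ts) (code_tms (map (subst_tm (var_inst d t0)) ts))))"
proof (induction ts)
  case Nil
  show ?case by (intro derivable_by_rule[where ps="[]"] search_rule_instI) (auto simp: inst_rule_def)
next
  case (Cons t ts)
  show ?case
    by (intro derivable_by_rule[where ps="[pair 7 (quad d (enc_tm t0) (enc_tm t) (enc_tm (subst_tm (var_inst d t0) t))),
            pair 8 (quad d (enc_tm t0) (code_tms ts) (code_tms (map (subst_tm (var_inst d t0)) ts)))]"] search_rule_instI)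
       (use Cons in \<open>auto simp: inst_rule_def code_nth_list\<close>)
qed

lemma derivable_inst_tm: "derivable search_rule (pair 7 (quad d (enc_tm t0) (enc_tm t) (enc_tm (subst_tm (var_inst d t0) t))))"
proof (induction t)
  case (Var i)
  show ?case
  proof (cases "i = d")
    case True
    have "derivable search_rule (pair 4 (quad d 0 (enc_tm t0) (enc_tm (subst_tm (var_shift d 0) t0))))" by (rule derivable_shift_tm)
    then show ?thesis
      by (intro derivable_by_rule[where ps="[pair 4 (quad d 0 (enc_tm t0) (enc_tm (subst_tm (var_shift d 0) t0)))]"] search_rule_instI)
         (use True in \<open>auto simp: inst_rule_def code_nth_list var_inst_def\<close>)
  next
    case False
    then show ?thesis
      by (intro derivable_by_rule[where ps="[]"] search_rule_instI) (auto simp: inst_rule_def var_inst_def)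
  qed
next
  case (Fn f ts)
  have "derivable search_rule (pair 8 (quad d (enc_tm t0) (code_tms ts) (code_tms (map (subst_tm (var_inst d t0)) ts))))" using Fn by (intro derivable_inst_tms) auto
  then show ?case
    by (intro derivable_by_rule[where ps="[pair 8 (quad d (enc_tm t0) (code_tms ts) (code_tms (map (subst_tm (var_inst d t0)) ts)))]"] search_rule_instI)
      (auto simp: inst_rule_def code_nth_list)
qed

lemma derivable_inst_fm: "derivable search_rule (pair 9 (quad d (enc_tm t0) (enc_fm p) (enc_fm (subst_fm (var_inst d t0) p))))"
proof (induction p arbitrary: d)
  case Bot
  show ?case by (intro derivable_by_rule[where ps="[]"] search_rule_instI) (auto simp: inst_rule_def)
next
  case (Eq a b)
  show ?case
    by (intro derivable_by_rule[where ps="[pair 7 (quad d (enc_tm t0) (enc_tm a) (enc_tm (subst_tm (var_inst d t0) a))),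
          pair 7 (quad d (enc_tm t0) (enc_tm b) (enc_tm (subst_tm (var_inst d t0) b)))]"] search_rule_instI)
       (auto simp: inst_rule_def code_nth_list intro: derivable_inst_tm)
next
  case (Rel r ts)
  have "derivable search_rule (pair 8 (quad d (enc_tm t0) (code_tms ts) (code_tms (map (subst_tm (var_inst d t0)) ts))))" by (intro derivable_inst_tms) (auto intro: derivable_inst_tm)
  then show ?case
    by (intro derivable_by_rule[where ps="[pair 8 (quad d (enc_tm t0) (code_tms ts) (code_tms (map (subst_tm (var_inst d t0)) ts)))]"] search_rule_instI)
      (auto simp: inst_rule_def code_nth_list)
next
  case (Imp p q)
  show ?case
    by (intro derivable_by_rule[where ps="[pair 9 (quad d (enc_tm t0) (enc_fm p) (enc_fm (subst_fm (var_inst d t0) p))),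
          pair 9 (quad d (enc_tm t0) (enc_fm q) (enc_fm (subst_fm (var_inst d t0) q)))]"] search_rule_instI)
       (auto simp: inst_rule_def code_nth_list intro: Imp.IH)
next
  case (All p)
  show ?case
    by (intro derivable_by_rule[where ps="[pair 9 (quad (Suc d) (enc_tm t0) (enc_fm p) (enc_fm (subst_fm (var_inst (Suc d) t0) p)))]"] search_rule_instI)
       (auto simp: inst_rule_def code_nth_list up_var_inst intro: All.IH)
qed

lemma derivable_prov: "prov L p \<Longrightarrow> derivable search_rule (pair 10 (enc_fm p))"
proof (induction rule: prov.induct)
  case (ax1 p q)
  then show ?case
    by (intro derivable_by_rule[where ps="[pair 3 (enc_fm p), pair 3 (enc_fm q)]"] search_rule_calculusI)
      (auto simp: calculus_rule_def code_nth_list intro: derivable_wf_fm)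
next
  case (ax2 p q r)
  then show ?case
    by (intro derivable_by_rule[where ps="[pair 3 (enc_fm p), pair 3 (enc_fm q), pair 3 (enc_fm r)]"] search_rule_calculusI)
      (auto simp: calculus_rule_def code_nth_list intro: derivable_wf_fm)
next
  case (ax3 p)
  then show ?case
    by (intro derivable_by_rule[where ps="[pair 3 (enc_fm p)]"] search_rule_calculusI)
      (auto simp: calculus_rule_def code_nth_list Neg_def intro: derivable_wf_fm)
next
  case (ax_inst p t)
  then show ?case unfolding inst_var_inst
    by (intro derivable_by_rule[where ps="[pair 3 (enc_fm p), pair 1 (enc_tm t),
          pair 9 (quad 0 (enc_tm t) (enc_fm p) (enc_fm (subst_fm (var_inst 0 t) p)))]"] search_rule_calculusI)
       (auto simp: calculus_rule_def code_nth_list intro: derivable_wf_fm derivable_wf_tm derivable_wf_tm' derivable_inst_fm)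
next
  case (ax_vac p)
  then show ?case unfolding lift_var_shift
    by (intro derivable_by_rule[where ps="[pair 3 (enc_fm p), pair 6 (quad 1 0 (enc_fm p) (enc_fm (subst_fm (var_shift 1 0) p)))]"] search_rule_calculusI)
       (auto simp: calculus_rule_def code_nth_list intro: derivable_wf_fm derivable_shift_fm)
next
  case (ax_dist p q)
  then show ?case
    by (intro derivable_by_rule[where ps="[pair 3 (enc_fm p), pair 3 (enc_fm q)]"] search_rule_calculusI)
      (auto simp: calculus_rule_def code_nth_list intro: derivable_wf_fm)
next
  case (ax_refl t)
  then show ?case
    by (intro derivable_by_rule[where ps="[pair 1 (enc_tm t)]"] search_rule_calculusI)
      (auto simp: calculus_rule_def code_nth_list intro: derivable_wf_tm derivable_wf_tm')
next
  case (ax_leib p s t)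
  then show ?case unfolding inst_var_inst
    by (intro derivable_by_rule[where ps="[pair 3 (enc_fm p), pair 1 (enc_tm s), pair 1 (enc_tm t),
          pair 9 (quad 0 (enc_tm s) (enc_fm p) (enc_fm (subst_fm (var_inst 0 s) p))),
          pair 9 (quad 0 (enc_tm t) (enc_fm p) (enc_fm (subst_fm (var_inst 0 t) p)))]"] search_rule_calculusI)
       (auto simp: calculus_rule_def code_nth_list intro: derivable_wf_fm derivable_wf_tm derivable_wf_tm' derivable_inst_fm)
next
  case (mp p q)
  then show ?case
    by (intro derivable_by_rule[where ps="[pair 10 (enc_fm (Imp p q)), pair 10 (enc_fm p)]"] search_rule_calculusI)
      (auto simp: calculus_rule_def code_nth_list)
next
  case (gen p)
  then show ?case
    by (intro derivable_by_rule[where ps="[pair 10 (enc_fm p)]"] search_rule_calculusI)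
      (auto simp: calculus_rule_def code_nth_list)
qed

lemma derivable_axiom_imps: "set axs \<subseteq> Ax \<Longrightarrow> wf_fm L p \<Longrightarrow> derivable search_rule (pair 11 (pair (enc_fm (foldr Imp axs p)) (enc_fm p)))"
proof (induction axs)
  case Nil
  then show ?case
    by (intro derivable_by_rule[where ps="[pair 3 (enc_fm p)]"] search_rule_theoremI)
      (auto simp: theorem_rule_def code_nth_list intro: derivable_wf_fm)
next
  case (Cons a axs)
  then show ?case
    by (intro derivable_by_rule[where ps="[pair 11 (pair (enc_fm (foldr Imp axs p)) (enc_fm p))]"] search_rule_theoremI)
      (auto simp: theorem_rule_def code_nth_list)
qed

lemma derivable_thm: "thm_of (L, Ax) p \<Longrightarrow> derivable search_rule (pair 12 (enc_fm p))"
proof -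
  assume "thm_of (L, Ax) p"
  then obtain axs where ax: "set axs \<subseteq> Ax" "prov L (foldr Imp axs p)" unfolding thm_of_def by auto
  then have "wf_fm L p" using prov_wf wf_foldr_Imp by blast
  then show ?thesis
    by (intro derivable_by_rule[where ps="[pair 10 (enc_fm (foldr Imp axs p)), pair 11 (pair (enc_fm (foldr Imp axs p)) (enc_fm p))]"] search_rule_theoremI)
       (use ax in \<open>auto simp: theorem_rule_def code_nth_list intro: derivable_prov derivable_axiom_imps\<close>)
qed

lemma derivable_answer_1: "thm_of (L, Ax) (\<phi> n) \<Longrightarrow> derivable search_rule (pair 13 (pair n 1))"
  by (intro derivable_by_rule[where ps="[pair 12 (enc_fm (\<phi> n))]"] search_rule_answerI)
     (auto simp: answer_rule_def code_nth_list intro: derivable_thm)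

lemma derivable_answer_0: "thm_of (L, Ax) (Neg (\<phi> n)) \<Longrightarrow> derivable search_rule (pair 13 (pair n 0))"
  using derivable_thm[of "Neg (\<phi> n)"]
  by (intro derivable_by_rule[where ps="[pair 12 (enc_fm (Neg (\<phi> n)))]"] search_rule_answerI)
     (auto simp: answer_rule_def code_nth_list enc_Neg)

lemma recursive_set_deciding_\<phi>:
  assumes "\<And>n. thm_of (L, Ax) (\<phi> n) \<or> thm_of (L, Ax) (Neg (\<phi> n))"
  obtains X where "recursive_set X"
    and "\<And>n. n \<in> X \<Longrightarrow> thm_of (L, Ax) (\<phi> n)" and "\<And>n. n \<notin> X \<Longrightarrow> thm_of (L, Ax) (Neg (\<phi> n))"
proof -
  obtain g where g: "computable 1 (\<lambda>xs. g (xs ! 0))" "\<And>n. derivable search_rule (pair 13 (pair n (g n)))"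
    using computable_derivable_answer[OF decidable_search_rule] assms derivable_answer_1 derivable_answer_0
    by metis
  have answer: "g n = 1 \<and> thm_of (L, Ax) (\<phi> n) \<or> g n = 0 \<and> thm_of (L, Ax) (Neg (\<phi> n))" for n
    using derivable_sound[OF g(2)] by (simp add: ex_disj_distrib)
  show ?thesis
  proof (rule that[of "{n. g n = 1}"])
    show "recursive_set {n. g n = 1}"
      by (intro recursive_set_CollectI decidable_eq g(1) computable_const)
  qed (use answer in force)+
qed

end

theorem complete_theory_decides_recursively:
  assumes "rec_axiomatizable S" "complete S"
    and sentences: "\<And>n. sentence (fst S) (\<phi> n)"
    and computable: "computable 1 (\<lambda>xs. enc_fm (\<phi> (xs ! 0)))"
  obtains X where "recursive_set X"
    and "\<And>n. n \<in> X \<Longrightarrow> thm_of S (\<phi> n)" and "\<And>n. n \<notin> X \<Longrightarrow> thm_of S (Neg (\<phi> n))"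
proof -
  obtain Ax where Ax: "recursive_set (enc_fm ` Ax)"
    "\<And>p. sentence (fst S) p \<Longrightarrow> thm_of (fst S, Ax) p \<longleftrightarrow> thm_of S p"
    using assms(1) unfolding rec_axiomatizable_def by blast
  interpret proof_search "fst S" Ax \<phi>
    using assms(1) Ax(1) computable unfolding rec_axiomatizable_def by unfold_locales auto
  have sentence_Neg: "sentence (fst S) (Neg (\<phi> n))" for n
    using sentences[of n] by (simp add: sentence_def Neg_def)
  have "thm_of (fst S, Ax) (\<phi> n) \<or> thm_of (fst S, Ax) (Neg (\<phi> n))" for n
    using assms(2) sentences[of n] sentence_Neg[of n] Ax(2) unfolding complete_def by blast
  then obtain X where "recursive_set X" "\<And>n. n \<in> X \<Longrightarrow> thm_of (fst S, Ax) (\<phi> n)"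
    "\<And>n. n \<notin> X \<Longrightarrow> thm_of (fst S, Ax) (Neg (\<phi> n))"
    using recursive_set_deciding_\<phi> by blast
  then show ?thesis using that Ax(2) sentences sentence_Neg by blast
qed

lemma consistent_not_thm_of_Neg:
  assumes "is_theory T" "consistent T" "thm_of T p"
  shows "\<not> thm_of T (Neg p)"
  using thm_of_mp[of T p Bot] assms unfolding is_theory_def sentence_def consistent_def Neg_def by blast

section \<open>Translated numerals of \<open>U_theory A B\<close>\<close>

text \<open>In the translation of a numeral, \<open>succ_graph F\<close> says that variable \<open>1\<close> is the interpreted
  successor of variable \<open>0\<close>, and \<open>pred_graph R\<close> that variable \<open>0\<close> satisfies the interpreted \<open>P\<close>;
  the conjunct \<open>Top\<close> closes the list of conjuncts built by \<open>combine\<close>.\<close>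

definition succ_graph :: "(nat \<Rightarrow> fm) \<Rightarrow> fm" where
  "succ_graph F = And (subst_fm (\<lambda>i. if i = 0 then Var 1 else if i = 1 then Var 0 else Var (Suc i)) (F 1)) Top"

definition pred_graph :: "(nat \<Rightarrow> fm) \<Rightarrow> fm" where
  "pred_graph R = And (subst_fm (\<lambda>i. if i = 0 then Var 0 else Var (Suc i)) (R 0)) Top"

lemma tr_tm_numeral_0: "tr_tm (Dm, F, R) (numeral_tm 0) = And (F 0) Top"
proof -
  have "(\<lambda>i. if i = 0 then Var 0 else if i \<le> 0 then Var (i - 1) else Var (0 + i)) = Var"
    by auto
  then show ?thesis by (simp add: combine_def Exs_def Conjs_def subst_fm_id)
qed

lemma tr_tm_numeral_Suc:
  "tr_tm (Dm, F, R) (numeral_tm (Suc n)) =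
     Ex (And (subst_fm (\<lambda>i. Var 0) Dm)
       (And (subst_fm (\<lambda>m. if m = 0 then Var 0 else Var (Suc m)) (tr_tm (Dm, F, R) (numeral_tm n))) (succ_graph F)))"
proof -
  have "(\<lambda>m. if m = 0 then Var 0 else Var (Suc 0 + Suc 0 + m - 1)) = (\<lambda>m. if m = 0 then Var 0 else Var (Suc m))"
    "(\<lambda>i. if i = 0 then Var (Suc 0) else if i \<le> Suc 0 then Var (i - 1) else Var (Suc 0 + i)) =
     (\<lambda>i. if i = 0 then Var 1 else if i = 1 then Var 0 else Var (Suc i))"
    by (auto simp: fun_eq_iff)
  then show ?thesis by (simp add: combine_def Exs_def Conjs_def succ_graph_def)
qed

lemma tr_fm_Rel_numeral:
  "tr_fm (Dm, F, R) (Rel 0 [numeral_tm n]) =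
     Ex (And (subst_fm (\<lambda>i. Var 0) Dm) (And (tr_tm (Dm, F, R) (numeral_tm n)) (pred_graph R)))"
proof -
  have "(\<lambda>m. if m = 0 then Var 0 else Var (Suc 0 + 0 + m - 1)) = Var"
    "(\<lambda>i. if i = 0 then Var i else Var (Suc 0 + i)) = (\<lambda>i. if i = 0 then Var 0 else Var (Suc i))"
    by (auto simp: fun_eq_iff)
  then show ?thesis by (simp add: combine_def Exs_def Conjs_def pred_graph_def subst_fm_id)
qed

context
  fixes Dm :: fm and F R :: "nat \<Rightarrow> fm" and L :: lang
  assumes Dm: "wf_fm L Dm" "fv_fm Dm \<subseteq> {0}"
    and F0: "wf_fm L (F 0)" "fv_fm (F 0) \<subseteq> {0..0}"
    and F1: "wf_fm L (F 1)" "fv_fm (F 1) \<subseteq> {0..1}"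
    and R0: "wf_fm L (R 0)" "fv_fm (R 0) \<subseteq> {..<1}"
begin

declare tr_tm.simps(2)[simp del] tr_fm.simps(3)[simp del] numeral_tm.simps[simp del]

private abbreviation num :: "nat \<Rightarrow> fm" where "num n \<equiv> tr_tm (Dm, F, R) (numeral_tm n)"
private abbreviation dom0 :: fm where "dom0 \<equiv> subst_fm (\<lambda>i. Var 0) Dm"

private lemma dom0_closed: "wf_fm L dom0" "fv_fm dom0 \<subseteq> {0}"
  using Dm by (auto intro: wf_subst_var simp: fv_subst_fm)

private lemma succ_graph_closed: "wf_fm L (succ_graph F)" "fv_fm (succ_graph F) \<subseteq> {0, 1}"
  using F1 by (auto simp: succ_graph_def fv_subst_fm intro!: wf_subst_var split: if_splits)

private lemma pred_graph_closed: "wf_fm L (pred_graph R)" "fv_fm (pred_graph R) \<subseteq> {0}"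
  using R0 by (auto simp: pred_graph_def fv_subst_fm intro!: wf_subst_var split: if_splits)

lemma tr_tm_numeral_closed: "wf_fm L (num n) \<and> fv_fm (num n) \<subseteq> {0}"
proof (induction n)
  case 0
  then show ?case using F0 by (auto simp: tr_tm_numeral_0)
next
  case (Suc n)
  have "subst_fm (\<lambda>m. if m = 0 then Var 0 else Var (Suc m)) (num n) = num n"
    by (rule subst_fm_id) (use Suc in auto)
  then show ?case
    using Suc dom0_closed succ_graph_closed by (auto simp: tr_tm_numeral_Suc)
qed

lemma tr_tm_numeral_Suc_closed: "num (Suc n) = Ex (And dom0 (And (num n) (succ_graph F)))"
proof -
  have "subst_fm (\<lambda>m. if m = 0 then Var 0 else Var (Suc m)) (num n) = num n"
    by (rule subst_fm_id) (use tr_tm_numeral_closed[of n] in auto)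
  then show ?thesis by (simp add: tr_tm_numeral_Suc)
qed

lemma sentence_tr_fm_Rel_numeral: "sentence L (tr_fm (Dm, F, R) (Rel 0 [numeral_tm n]))"
  using tr_tm_numeral_closed[of n] dom0_closed pred_graph_closed
  by (auto simp: sentence_def tr_fm_Rel_numeral)

text \<open>The codes of the translated numerals satisfy a primitive recursion.\<close>

lemma computable_enc_tr_fm_Rel_numeral:
  "computable 1 (\<lambda>xs. enc_fm (tr_fm (Dm, F, R) (Rel 0 [numeral_tm (xs ! 0)])))"
proof -
  define step where "step r = code_Ex (code_And (enc_fm dom0) (code_And r (enc_fm (succ_graph F))))" for r
  have code_num: "enc_fm (num n) = rec_nat (enc_fm (num 0)) (\<lambda>y r. step r) n" for n
    by (induction n) (simp_all add: tr_tm_numeral_Suc_closed enc_Ex enc_And step_def)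
  have "computable 1 (\<lambda>xs. rec_nat (enc_fm (num 0)) (\<lambda>y r. (\<lambda>ys. step (ys ! 0)) (r # y # xs)) (xs ! 0))"
    unfolding step_def
    by (intro computable_prec computable_const computable_proj computable_prod_encode) simp_all
  then have "computable 1 (\<lambda>xs. enc_fm (num (xs ! 0)))"
    by (rule computable_cong) (simp add: code_num[symmetric])
  then have "computable 1 (\<lambda>xs. code_Ex (code_And (enc_fm dom0) (code_And (enc_fm (num (xs ! 0))) (enc_fm (pred_graph R)))))"
    by (intro computable_prod_encode computable_const)
  then show ?thesis by (simp add: tr_fm_Rel_numeral enc_Ex enc_And)
qed

end

lemma tr_fm_Neg: "tr_fm I (Neg p) = Neg (tr_fm I p)"
  by (simp add: Neg_def)

lemma is_interpretation_U_theory: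
  assumes "is_interpretation (Dm, F, R) (U_theory A B) S"
  shows "wf_fm (fst S) Dm" "fv_fm Dm \<subseteq> {0}"
    and "wf_fm (fst S) (F 0)" "fv_fm (F 0) \<subseteq> {0..0}"
    and "wf_fm (fst S) (F 1)" "fv_fm (F 1) \<subseteq> {0..1}"
    and "wf_fm (fst S) (R 0)" "fv_fm (R 0) \<subseteq> {..<1}"
    and "n \<in> A \<Longrightarrow> thm_of S (tr_fm (Dm, F, R) (Rel 0 [numeral_tm n]))"
    and "n \<in> B \<Longrightarrow> thm_of S (Neg (tr_fm (Dm, F, R) (Rel 0 [numeral_tm n])))"
proof -
  have L_U_arity: "fst L_U 0 = Some 0" "fst L_U 1 = Some 1" "snd L_U 0 = Some 1"
    by (simp_all add: L_U_def)
  have "wf_fm (fst S) Dm \<and> fv_fm Dm \<subseteq> {0} \<and>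
     (\<forall>f k. fst L_U f = Some k \<longrightarrow> wf_fm (fst S) (F f) \<and> fv_fm (F f) \<subseteq> {0..k}) \<and>
     (\<forall>r k. snd L_U r = Some k \<longrightarrow> wf_fm (fst S) (R r) \<and> fv_fm (R r) \<subseteq> {..<k}) \<and>
     (\<forall>p\<in>snd (U_theory A B). thm_of S (tr_fm (Dm, F, R) p))"
    using assms unfolding is_interpretation_def by (simp add: Let_def U_theory_def)
  moreover have "Rel 0 [numeral_tm n] \<in> snd (U_theory A B)" if "n \<in> A"
    using that by (auto simp: U_theory_def)
  moreover have "Neg (Rel 0 [numeral_tm n]) \<in> snd (U_theory A B)" if "n \<in> B"
    using that by (auto simp: U_theory_def)
  ultimately show "wf_fm (fst S) Dm" "fv_fm Dm \<subseteq> {0}"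
    and "wf_fm (fst S) (F 0)" "fv_fm (F 0) \<subseteq> {0..0}"
    and "wf_fm (fst S) (F 1)" "fv_fm (F 1) \<subseteq> {0..1}"
    and "wf_fm (fst S) (R 0)" "fv_fm (R 0) \<subseteq> {..<1}"
    and "n \<in> A \<Longrightarrow> thm_of S (tr_fm (Dm, F, R) (Rel 0 [numeral_tm n]))"
    and "n \<in> B \<Longrightarrow> thm_of S (Neg (tr_fm (Dm, F, R) (Rel 0 [numeral_tm n])))"
    using L_U_arity tr_fm_Neg by metis+
qed

theorem mainTheorem3:
  fixes A B :: "nat set"
  assumes "rec_inseparable A B"
  shows "G1 (U_theory A B)"
  unfolding G1_def
proof (intro allI impI notI)
  fix S :: fo_theory
  assume S: "is_theory S \<and> rec_axiomatizable S \<and> consistent S \<and> interpretable (U_theory A B) S"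
    and "complete S"
  then obtain Dm F R where I: "is_interpretation (Dm, F, R) (U_theory A B) S"
    unfolding interpretable_def by (metis prod_cases3)
  define \<phi> where "\<phi> n = tr_fm (Dm, F, R) (Rel 0 [numeral_tm n])" for n
  note closed = is_interpretation_U_theory(1-8)[OF I]
  obtain X where X: "recursive_set X"
    "\<And>n. n \<in> X \<Longrightarrow> thm_of S (\<phi> n)" "\<And>n. n \<notin> X \<Longrightarrow> thm_of S (Neg (\<phi> n))"
    using complete_theory_decides_recursively[of S \<phi>] S \<open>complete S\<close>
      sentence_tr_fm_Rel_numeral[where Dm = Dm and F = F and R = R and L = "fst S", OF closed]
      computable_enc_tr_fm_Rel_numeral[where Dm = Dm and F = F and R = R and L = "fst S", OF closed]
    unfolding \<phi>_def by blast
  have "A \<subseteq> X" "X \<inter> B = {}"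
    using X is_interpretation_U_theory(9,10)[OF I] consistent_not_thm_of_Neg S unfolding \<phi>_def by blast+
  then show False using assms X(1) unfolding rec_inseparable_def by blast
qed

end
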